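(* Let $C_1,C_2$ be compatible counting-star formulas and let $E\wedge H$ be a derivation result of $S_{\{1\}}(C_1)*S_{\{2\}}(C_2)$. Then $E\wedge H\Rightarrow S_{\{1\}}(C_1)*S_{\{2\}}(C_2)$ is valid (true in every $L'$-environment).
   Context: BASE. Fix a finite vocabulary $L=\mathcal A\cup\mathcal F$ ($\mathcal A$ unary, $\mathcal F$ binary predicate symbols); equality is a logical symbol not in $\mathcal F$, always interpreted as identity. Formulas: first-order logic with equality, counting quantifiers $\exists^{\ge k}x.G$, $\exists^{=k}x.G$, and spatial conjunction $*$. An environment has a finite nonempty domain $D$, interpretations of the predicate symbols, and an assignment to variables. $\mathrm{split}\,e\,[e_1,\dots,e_r]$ (same domain, same variable assignment) holds iff for each predicate symbol $P$, $e(P)$ is the disjoint union of the $e_i(P)$; $[\![G_1*G_2]\!]e$ holds iff some $e_1,e_2$ with $\mathrm{split}\,e\,[e_1,e_2]$ satisfy $[\![G_1]\!]e_1$, $[\![G_2]\!]e_2$. $G\sim H$ means equal truth values in all environments. NORMAL FORMS. Atoms over distinct variables $u_1,\dots,u_p$ are $A(u_i)$, $f(u_i,u_j)$, $u_i=u_j$; a GCCAT formula over them contains for each such atom exactly one of the atom or its negation (nothing else), with $u_i=u_j$ positive iff $i=j$. Fix distinct $x_1,\dots,x_n$ and $x$. $\mathrm{ext}(x_1,\dots,x_n;x)$ is the set of conjunctions containing, for each atom over $x,x_1,\dots,x_n$ containing $x$, exactly one of the atom or its negation, with $x=x$ positive and $x=x_i$, $x_i=x$ negated. For $p\ge1$,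 $C_p=\{0,\dots,p-1,p^+\}$; $\exists^{c}x.G$ means $\exists^{=c}x.G$ for integer $c$ and $\exists^{\ge p}x.G$ for $c=p^+$. A counting-star formula is $C=E\wedge F\wedge\bigwedge_{i=1}^{k}\exists^{s_i}x.F'_i$ with $E=\bigwedge_{j=1}^m y_j=x_{i_j}$ ($y_j$ distinct variables not among $x,x_1,\dots,x_n$), $F$ GCCAT over $x_1,\dots,x_n$, $F'_1,\dots,F'_k$ an enumeration of $\mathrm{ext}(x_1,\dots,x_n;x)$, $s_i\in C_q$ for some $q\ge2$. Two counting-star formulas are compatible if they have the same equality part $E$ and GCCAT parts $F_1,F_2$ over the same $x_1,\dots,x_n$. OPERATIONS. $\mathrm{Pos}(T)$ is the set of non-equality positive literals of a conjunction $T$. For $T_1,T_2\in\mathrm{ext}(x_1,\dots,x_n;x)$, $T_1\oplus T_2$ is defined iff $\mathrm{Pos}(T_1)\cap\mathrm{Pos}(T_2)=\emptyset$ and is the unique $T\in\mathrm{ext}$ with $\mathrm{Pos}(T)=\mathrm{Pos}(T_1)\cup\mathrm{Pos}(T_2)$; for GCCAT $F_1,F_2$ over $x_1,\dots,x_n$, $F_1\otimes F_2$ is defined iff $\mathrm{Pos}(F_1)\cap\mathrm{Pos}(F_2)=\emptyset$ and is the unique GCCAT $F$ over $x_1,\dots,x_n$ with $\mathrm{Pos}(F)=\mathrm{Pos}(F_1)\cup\mathrm{Pos}(F_2)$. TRANSLATION. $L'=L\cup\{B_1,B_2\}$ (new unary symbols, split by $*$ like all others). $\mathrm{Mark}_\emptyset(x)=\neg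 B_1(x)\wedge\neg B_2(x)$, $\mathrm{Mark}_{\{1\}}(x)=B_1(x)\wedge\neg B_2(x)$, $\mathrm{Mark}_{\{2\}}(x)=\neg B_1(x)\wedge B_2(x)$, $\mathrm{Mark}_{\{1,2\}}(x)=B_1(x)\wedge B_2(x)$. $\mathcal E_0$: GCCAT over $x_1,\dots,x_n$ whose only positive literals are $x_i=x_i$; $\varnothing_x$: element of $\mathrm{ext}$ whose only positive literal is $x=x$; $\delta(x):=\bigwedge_i x\ne x_i$. $G_E:=\mathcal E_0\wedge\forall x.(\delta(x)\to\varnothing_x\wedge\mathrm{Mark}_\emptyset(x))$; $K(F):=F\wedge\forall x.(\delta(x)\to\varnothing_x\wedge\mathrm{Mark}_\emptyset(x))$; $\mathrm{Any}_m(T):=\mathcal E_0\wedge\forall x.(\delta(x)\to(T\wedge\mathrm{Mark}_m(x))\vee(\varnothing_x\wedge\mathrm{Mark}_\emptyset(x)))$; $\mathrm{One}_m(T):=\mathrm{Any}_m(T)\wedge\exists^{=1}x.(\delta(x)\wedge T\wedge\mathrm{Mark}_m(x))$. $X_m(\exists^{0}x.T):=G_E$, $X_m(\exists^{i+1}x.T):=\mathrm{One}_m(T)*X_m(\exists^{i}x.T)$, $X_m(\exists^{p^+}x.T):=X_m(\exists^{p}x.T)*\mathrm{Any}_m(T)$. $S_m(C):=E\wedge\big(K(F)*X_m(\exists^{s_1}x.F'_1)*\dots*X_m(\exists^{s_k}x.F'_k)\big)$. RULES (when $T_1\oplus T_2$ is defined): (1) $\mathrm{One}_{\{1\}}(T_1)*\mathrm{One}_{\{2\}}(T_2)\to\mathrm{One}_{\{1,2\}}(T_1\oplus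 T_2)$; (2) $\mathrm{One}_{\{1\}}(T_1)*\mathrm{Any}_{\{2\}}(T_2)\to\mathrm{One}_{\{1,2\}}(T_1\oplus T_2)*\mathrm{Any}_{\{2\}}(T_2)$; (3) $\mathrm{Any}_{\{1\}}(T_1)*\mathrm{One}_{\{2\}}(T_2)\to\mathrm{Any}_{\{1\}}(T_1)*\mathrm{One}_{\{1,2\}}(T_1\oplus T_2)$; (4) $\mathrm{Any}_{\{1\}}(T_1)*\mathrm{Any}_{\{2\}}(T_2)\to\mathrm{Any}_{\{1\}}(T_1)*\mathrm{Any}_{\{2\}}(T_2)*\mathrm{Any}_{\{1,2\}}(T_1\oplus T_2)$; (5) $\mathrm{Any}_{\{1\}}(T)\to G_E$; (6) $\mathrm{Any}_{\{2\}}(T)\to G_E$. DERIVATION. For compatible $C_1=E\wedge F_1\wedge\dots$, $C_2=E\wedge F_2\wedge\dots$, write $S_{\{1\}}(C_1)*S_{\{2\}}(C_2)$ as $E\wedge W$ where $W$ is the spatial conjunction of $K(F_1)$, $K(F_2)$ and all the (unfolded) $\mathrm{One}_m$, $\mathrm{Any}_m$, $G_E$ conjuncts of the $X_{\{1\}}$ and $X_{\{2\}}$ parts. $E\wedge H$ is a derivation result if $H$ is obtained from $W$ by: first replacing $K(F_1)*K(F_2)$ by $K(F_1\otimes F_2)$ if defined, and by $\mathit{false}$ otherwise; then applying finitely many rule instances of (1)–(6), each replacing a spatial sub-conjunction matching a rule's left side by its right side, working modulo associativity and commutativity of $*$, the unit law $G*G_E\sim G$ and idempotence $\mathrm{Any}_m(T)*\mathrm{Any}_m(T)\sim\mathrm{Any}_m(T)$,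 with all applications of (1)–(4) preceding those of (5)–(6); and such that in the end, apart from the $K$-conjunct, $H$ contains only conjuncts of the forms $\mathrm{One}_{\{1,2\}}(T)$ and $\mathrm{Any}_{\{1,2\}}(T)$. *)

theory Defs
  imports Main "HOL-Library.Multiset"
begin

text \<open>Variables are natural numbers. The original vocabulary L has unary symbols of
  type 'u and binary symbols of type 'b (both finite types in the theorem).
  L' adds the two new unary symbols B1, B2.\<close>

datatype 'u usym = Orig 'u | B1 | B2

datatype ('u,'b) form =
    FTrue | FFalse
  | UAt "'u usym" nat
  | BAt 'b nat nat
  | Eq nat nat
  | Neg "('u,'b) form"
  | Conj "('u,'b) form" "('u,'b) form"
  | Disj "('u,'b) form" "('u,'b) form"
  | Imp "('u,'b) form" "('u,'b) form"
  | All nat "('u,'b) form"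
  | Ex nat "('u,'b) form"
  | ExGe nat nat "('u,'b) form"
  | ExEq nat nat "('u,'b) form"
  | Star "('u,'b) form" "('u,'b) form"

record ('d,'u,'b) env =
  edom :: "'d set"
  eU   :: "'u usym \<Rightarrow> 'd set"
  eB   :: "'b \<Rightarrow> ('d \<times> 'd) set"
  easg :: "nat \<Rightarrow> 'd"

definition wf_env :: "('d,'u,'b) env \<Rightarrow> bool" where
  "wf_env e \<longleftrightarrow> finite (edom e) \<and> edom e \<noteq> {} \<and>
     (\<forall>P. eU e P \<subseteq> edom e) \<and> (\<forall>f. eB e f \<subseteq> edom e \<times> edom e) \<and>
     (\<forall>v. easg e v \<in> edom e)"

definition split2 :: "('d,'u,'b) env \<Rightarrow> ('d,'u,'b) env \<Rightarrow> ('d,'u,'b) env \<Rightarrow> bool" where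
  "split2 e e1 e2 \<longleftrightarrow>
     edom e1 = edom e \<and> edom e2 = edom e \<and> easg e1 = easg e \<and> easg e2 = easg e \<and>
     (\<forall>P. eU e P = eU e1 P \<union> eU e2 P \<and> eU e1 P \<inter> eU e2 P = {}) \<and>
     (\<forall>f. eB e f = eB e1 f \<union> eB e2 f \<and> eB e1 f \<inter> eB e2 f = {})"

definition upd :: "('d,'u,'b) env \<Rightarrow> nat \<Rightarrow> 'd \<Rightarrow> ('d,'u,'b) env" where
  "upd e v d = e\<lparr>easg := (easg e)(v := d)\<rparr>"

primrec sat :: "('u,'b) form \<Rightarrow> ('d,'u,'b) env \<Rightarrow> bool" where
  "sat FTrue e = True"
| "sat FFalse e = False"
| "sat (UAt P v) e = (easg e v \<in> eU e P)"
| "sat (BAt f u v) e = ((easg e u, easg e v) \<in> eB e f)"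
| "sat (Eq u v) e = (easg e u = easg e v)"
| "sat (Neg G) e = (\<not> sat G e)"
| "sat (Conj G H) e = (sat G e \<and> sat H e)"
| "sat (Disj G H) e = (sat G e \<or> sat H e)"
| "sat (Imp G H) e = (sat G e \<longrightarrow> sat H e)"
| "sat (All v G) e = (\<forall>d\<in>edom e. sat G (upd e v d))"
| "sat (Ex v G) e = (\<exists>d\<in>edom e. sat G (upd e v d))"
| "sat (ExGe k v G) e = (k \<le> card {d\<in>edom e. sat G (upd e v d)})"
| "sat (ExEq k v G) e = (card {d\<in>edom e. sat G (upd e v d)} = k)"
| "sat (Star G H) e = (\<exists>e1 e2. split2 e e1 e2 \<and> sat G e1 \<and> sat H e2)"

fun conj_list :: "('u,'b) form list \<Rightarrow> ('u,'b) form" where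
  "conj_list [] = FTrue"
| "conj_list [G] = G"
| "conj_list (G # Gs) = Conj G (conj_list Gs)"

fun star_list :: "('u,'b) form list \<Rightarrow> ('u,'b) form" where
  "star_list [] = FTrue"
| "star_list [G] = G"
| "star_list (G # Gs) = Star G (star_list Gs)"

text \<open>Atoms/literals over the ORIGINAL vocabulary L.\<close>
datatype ('u,'b) atom = AU 'u nat | AB 'b nat nat | AE nat nat
datatype ('u,'b) lit = PosL "('u,'b) atom" | NegL "('u,'b) atom"

fun atom_vars :: "('u,'b) atom \<Rightarrow> nat set" where
  "atom_vars (AU A u) = {u}"
| "atom_vars (AB f u v) = {u, v}"
| "atom_vars (AE u v) = {u, v}"

fun is_eq_atom :: "('u,'b) atom \<Rightarrow> bool" where
  "is_eq_atom (AE u v) = True"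
| "is_eq_atom _ = False"

fun lit_atom :: "('u,'b) lit \<Rightarrow> ('u,'b) atom" where
  "lit_atom (PosL a) = a"
| "lit_atom (NegL a) = a"

definition atoms_over :: "nat set \<Rightarrow> ('u,'b) atom set" where
  "atoms_over V = {AU A u | A u. u \<in> V} \<union> {AB f u v | f u v. u \<in> V \<and> v \<in> V}
                  \<union> {AE u v | u v. u \<in> V \<and> v \<in> V}"

definition complete_over :: "('u,'b) atom set \<Rightarrow> ('u,'b) lit set \<Rightarrow> bool" where
  "complete_over A S \<longleftrightarrow> (\<forall>l\<in>S. lit_atom l \<in> A) \<and>
     (\<forall>a\<in>A. (PosL a \<in> S) \<noteq> (NegL a \<in> S)) \<and>
     (\<forall>u v. AE u v \<in> A \<longrightarrow> (PosL (AE u v) \<in> S \<longleftrightarrow> u = v))"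

definition is_gccat :: "nat list \<Rightarrow> ('u,'b) lit set \<Rightarrow> bool" where
  "is_gccat xs S \<longleftrightarrow> complete_over (atoms_over (set xs)) S"

definition ext :: "nat list \<Rightarrow> nat \<Rightarrow> ('u,'b) lit set set" where
  "ext xs x = {S. complete_over {a \<in> atoms_over (insert x (set xs)). x \<in> atom_vars a} S}"

definition posset :: "('u,'b) lit set \<Rightarrow> ('u,'b) atom set" where
  "posset S = {a. PosL a \<in> S \<and> \<not> is_eq_atom a}"

definition oplus :: "nat list \<Rightarrow> nat \<Rightarrow> ('u,'b) lit set \<Rightarrow> ('u,'b) lit set \<Rightarrow> ('u,'b) lit set" where
  "oplus xs x T1 T2 = (THE T. T \<in> ext xs x \<and> posset T = posset T1 \<union> posset T2)"

definition otimes :: "nat list \<Rightarrow> ('u,'b) lit set \<Rightarrow> ('u,'b) lit set \<Rightarrow> ('u,'b) lit set" where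
  "otimes xs F1 F2 = (THE F. is_gccat xs F \<and> posset F = posset F1 \<union> posset F2)"

fun atom_form :: "('u,'b) atom \<Rightarrow> ('u,'b) form" where
  "atom_form (AU A u) = UAt (Orig A) u"
| "atom_form (AB f u v) = BAt f u v"
| "atom_form (AE u v) = Eq u v"

fun lit_form :: "('u,'b) lit \<Rightarrow> ('u,'b) form" where
  "lit_form (PosL a) = atom_form a"
| "lit_form (NegL a) = Neg (atom_form a)"

definition conj_set :: "('u,'b) lit set \<Rightarrow> ('u,'b) form" where
  "conj_set S = conj_list (map lit_form (SOME ls. set ls = S \<and> distinct ls))"

datatype cnt = Exactly nat | AtLeast nat   \<comment> \<open>c in C_p: an integer c, or p^+\<close>

definition Cset :: "nat \<Rightarrow> cnt set" where
  "Cset q = {Exactly i | i. i < q} \<union> {AtLeast q}"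

text \<open>A counting-star formula E /\ F /\ AND_i exists^{s_i} x. F'_i : equality part as list of
  pairs (y_j, x_{i_j}), the GCCAT part F, and the list of pairs (F'_i, s_i).\<close>
record ('u,'b) cstar =
  ceq    :: "(nat \<times> nat) list"
  cF     :: "('u,'b) lit set"
  cparts :: "(('u,'b) lit set \<times> cnt) list"

definition is_cstar :: "nat list \<Rightarrow> nat \<Rightarrow> ('u,'b) cstar \<Rightarrow> bool" where
  "is_cstar xs x C \<longleftrightarrow>
     distinct (map fst (ceq C)) \<and>
     (\<forall>(y,z)\<in>set (ceq C). y \<notin> set (x # xs) \<and> z \<in> set xs) \<and>
     is_gccat xs (cF C) \<and>
     distinct (map fst (cparts C)) \<and> set (map fst (cparts C)) = ext xs x \<and>
     (\<exists>q\<ge>2. \<forall>(T,s)\<in>set (cparts C). s \<in> Cset q)"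

definition compatible :: "('u,'b) cstar \<Rightarrow> ('u,'b) cstar \<Rightarrow> bool" where
  "compatible C1 C2 \<longleftrightarrow> ceq C1 = ceq C2"

definition eq_form :: "(nat \<times> nat) list \<Rightarrow> ('u,'b) form" where
  "eq_form E = conj_list (map (\<lambda>(y,z). Eq y z) E)"

definition mark :: "nat set \<Rightarrow> nat \<Rightarrow> ('u,'b) form" where
  "mark m v = Conj (if 1 \<in> m then UAt B1 v else Neg (UAt B1 v))
                   (if 2 \<in> m then UAt B2 v else Neg (UAt B2 v))"

definition E0 :: "nat list \<Rightarrow> ('u,'b) form" where
  "E0 xs = conj_set (THE F. is_gccat xs F \<and> posset F = {})"

definition empx :: "nat list \<Rightarrow> nat \<Rightarrow> ('u,'b) form" where
  "empx xs x = conj_set (THE T. T \<in> ext xs x \<and> posset T = {})"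

definition delta :: "nat list \<Rightarrow> nat \<Rightarrow> ('u,'b) form" where
  "delta xs x = conj_list (map (\<lambda>xi. Neg (Eq x xi)) xs)"

definition GE :: "nat list \<Rightarrow> nat \<Rightarrow> ('u,'b) form" where
  "GE xs x = Conj (E0 xs) (All x (Imp (delta xs x) (Conj (empx xs x) (mark {} x))))"

definition KF :: "nat list \<Rightarrow> nat \<Rightarrow> ('u,'b) lit set \<Rightarrow> ('u,'b) form" where
  "KF xs x F = Conj (conj_set F) (All x (Imp (delta xs x) (Conj (empx xs x) (mark {} x))))"

definition AnyF :: "nat list \<Rightarrow> nat \<Rightarrow> nat set \<Rightarrow> ('u,'b) lit set \<Rightarrow> ('u,'b) form" where
  "AnyF xs x m T = Conj (E0 xs) (All x (Imp (delta xs x)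
      (Disj (Conj (conj_set T) (mark m x)) (Conj (empx xs x) (mark {} x)))))"

definition OneF :: "nat list \<Rightarrow> nat \<Rightarrow> nat set \<Rightarrow> ('u,'b) lit set \<Rightarrow> ('u,'b) form" where
  "OneF xs x m T = Conj (AnyF xs x m T)
      (ExEq 1 x (Conj (delta xs x) (Conj (conj_set T) (mark m x))))"

primrec Xeq :: "nat list \<Rightarrow> nat \<Rightarrow> nat set \<Rightarrow> ('u,'b) lit set \<Rightarrow> nat \<Rightarrow> ('u,'b) form" where
  "Xeq xs x m T 0 = GE xs x"
| "Xeq xs x m T (Suc i) = Star (OneF xs x m T) (Xeq xs x m T i)"

fun Xf :: "nat list \<Rightarrow> nat \<Rightarrow> nat set \<Rightarrow> ('u,'b) lit set \<Rightarrow> cnt \<Rightarrow> ('u,'b) form" where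
  "Xf xs x m T (Exactly i) = Xeq xs x m T i"
| "Xf xs x m T (AtLeast p) = Star (Xeq xs x m T p) (AnyF xs x m T)"

definition Sf :: "nat list \<Rightarrow> nat \<Rightarrow> nat set \<Rightarrow> ('u,'b) cstar \<Rightarrow> ('u,'b) form" where
  "Sf xs x m C = Conj (eq_form (ceq C))
      (foldl Star (KF xs x (cF C)) (map (\<lambda>(T,s). Xf xs x m T s) (cparts C)))"

section \<open>Derivations (spatial conjunctions modulo AC as multisets of conjuncts)\<close>

datatype ('u,'b) sconj = SK "('u,'b) lit set" | SFalse | SGE
  | SOne "nat set" "('u,'b) lit set" | SAny "nat set" "('u,'b) lit set"

fun sform :: "nat list \<Rightarrow> nat \<Rightarrow> ('u,'b) sconj \<Rightarrow> ('u,'b) form" where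
  "sform xs x (SK F) = KF xs x F"
| "sform xs x SFalse = FFalse"
| "sform xs x SGE = GE xs x"
| "sform xs x (SOne m T) = OneF xs x m T"
| "sform xs x (SAny m T) = AnyF xs x m T"

fun xconj :: "nat set \<Rightarrow> ('u,'b) lit set \<times> cnt \<Rightarrow> ('u,'b) sconj multiset" where
  "xconj m (T, Exactly i) = replicate_mset i (SOne m T) + {#SGE#}"
| "xconj m (T, AtLeast p) = replicate_mset p (SOne m T) + {#SGE#} + {#SAny m T#}"

text \<open>Initial state after replacing K(F1)*K(F2) by K(F1 otimes F2) or false.\<close>
definition init_state :: "nat list \<Rightarrow> ('u,'b) cstar \<Rightarrow> ('u,'b) cstar \<Rightarrow> ('u,'b) sconj multiset" where
  "init_state xs C1 C2 =
     {# (if posset (cF C1) \<inter> posset (cF C2) = {} then SK (otimes xs (cF C1) (cF C2)) else SFalse) #}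
     + sum_list (map (xconj {1}) (cparts C1)) + sum_list (map (xconj {2}) (cparts C2))"

text \<open>Rewriting modulo the unit law G * G_E ~ G and idempotence of Any (both directions).\<close>
definition eqstep :: "('u,'b) sconj multiset \<Rightarrow> ('u,'b) sconj multiset \<Rightarrow> bool" where
  "eqstep M M' \<longleftrightarrow>
     (M \<noteq> {#} \<and> M' = add_mset SGE M) \<or> (M' \<noteq> {#} \<and> M = add_mset SGE M') \<or>
     (\<exists>N m T. M = N + {#SAny m T, SAny m T#} \<and> M' = N + {#SAny m T#}) \<or>
     (\<exists>N m T. M' = N + {#SAny m T, SAny m T#} \<and> M = N + {#SAny m T#})"

definition rule14 :: "nat list \<Rightarrow> nat \<Rightarrow> ('u,'b) sconj multiset \<Rightarrow> ('u,'b) sconj multiset \<Rightarrow> bool" where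
  "rule14 xs x M M' \<longleftrightarrow> (\<exists>N T1 T2. posset T1 \<inter> posset T2 = {} \<and>
     ((M = N + {#SOne {1} T1, SOne {2} T2#} \<and> M' = N + {#SOne {1,2} (oplus xs x T1 T2)#}) \<or>
      (M = N + {#SOne {1} T1, SAny {2} T2#} \<and>
         M' = N + {#SOne {1,2} (oplus xs x T1 T2), SAny {2} T2#}) \<or>
      (M = N + {#SAny {1} T1, SOne {2} T2#} \<and>
         M' = N + {#SAny {1} T1, SOne {1,2} (oplus xs x T1 T2)#}) \<or>
      (M = N + {#SAny {1} T1, SAny {2} T2#} \<and>
         M' = N + {#SAny {1} T1, SAny {2} T2, SAny {1,2} (oplus xs x T1 T2)#})))"

definition rule56 :: "('u,'b) sconj multiset \<Rightarrow> ('u,'b) sconj multiset \<Rightarrow> bool" where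
  "rule56 M M' \<longleftrightarrow> (\<exists>N T. (M = N + {#SAny {1} T#} \<or> M = N + {#SAny {2} T#}) \<and> M' = N + {#SGE#})"

definition phase1 :: "nat list \<Rightarrow> nat \<Rightarrow> ('u,'b) sconj multiset \<Rightarrow> ('u,'b) sconj multiset \<Rightarrow> bool" where
  "phase1 xs x M M' \<longleftrightarrow> eqstep M M' \<or> rule14 xs x M M'"

definition phase2 :: "('u,'b) sconj multiset \<Rightarrow> ('u,'b) sconj multiset \<Rightarrow> bool" where
  "phase2 M M' \<longleftrightarrow> eqstep M M' \<or> rule56 M M'"

fun is_Kslot :: "('u,'b) sconj \<Rightarrow> bool" where
  "is_Kslot (SK F) = True"
| "is_Kslot SFalse = True"
| "is_Kslot _ = False"

fun is_final12 :: "('u,'b) sconj \<Rightarrow> bool" where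
  "is_final12 (SOne m T) = (m = {1,2})"
| "is_final12 (SAny m T) = (m = {1,2})"
| "is_final12 _ = False"

definition final_state :: "('u,'b) sconj multiset \<Rightarrow> bool" where
  "final_state M \<longleftrightarrow> (\<exists>k R. M = add_mset k R \<and> is_Kslot k \<and> (\<forall>d\<in>#R. is_final12 d))"

definition derivation_result ::
  "nat list \<Rightarrow> nat \<Rightarrow> ('u,'b) cstar \<Rightarrow> ('u,'b) cstar \<Rightarrow> ('u,'b) form \<Rightarrow> bool" where
  "derivation_result xs x C1 C2 H \<longleftrightarrow>
     (\<exists>M1 M2 l. (phase1 xs x)\<^sup>*\<^sup>* (init_state xs C1 C2) M1 \<and> phase2\<^sup>*\<^sup>* M1 M2 \<and>
        final_state M2 \<and> mset l = M2 \<and> H = star_list (map (sform xs x) l))"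

end

theory Submission
  imports Defs
begin

text \<open>Every rewriting step of a derivation is sound when read backwards: its right-hand side
  entails its left-hand side in any spatial context, and K(F1 \<otimes> F2) entails K(F1) * K(F2).
  Hence H entails the initial spatial conjunction W, which is a regrouping of
  S{1}(C1) * S{2}(C2) without the shared equality part E.

  The entailments are checked semantically. A translated conjunct only constrains which
  relational facts hold among the x_i and, for each element d outside them, which facts link d
  to the x_i and how d is marked by B1 and B2. Rules (1)-(4) are inverted by sending, for every
  doubly marked element, its T1-facts and its B1-mark to the left and all other facts to the
  right; the unit law holds because a G_E-part contributes no observable fact.\<close>

type_synonym ('d,'u,'b) assn = "('d,'u,'b) env \<Rightarrow> bool"

lemma split2_commute: "split2 e e1 e2 \<Longrightarrow> split2 e e2 e1"
  by (auto simp: split2_def)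

lemma split2_assoc:
  assumes "split2 e e1 e23" "split2 e23 e2 e3"
  shows "\<exists>e12. split2 e e12 e3 \<and> split2 e12 e1 e2"
proof -
  let ?e12 = "e1\<lparr>eU := \<lambda>P. eU e1 P \<union> eU e2 P, eB := \<lambda>f. eB e1 f \<union> eB e2 f\<rparr>"
  have "split2 e ?e12 e3 \<and> split2 ?e12 e1 e2"
    using assms unfolding split2_def by (auto; blast)
  then show ?thesis by blast
qed

lemma split2_assoc':
  assumes "split2 e e12 e3" "split2 e12 e1 e2"
  shows "\<exists>e23. split2 e e1 e23 \<and> split2 e23 e2 e3"
  using split2_assoc[OF split2_commute[OF assms(1)] split2_commute[OF assms(2)]]
  by (blast dest: split2_commute)

definition empty_env :: "('d,'u,'b) env \<Rightarrow> ('d,'u,'b) env" where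
  "empty_env e = e\<lparr>eU := (\<lambda>_. {}), eB := (\<lambda>_. {})\<rparr>"

definition is_empty_env :: "('d,'u,'b) env \<Rightarrow> bool" where
  "is_empty_env e \<longleftrightarrow> (\<forall>P. eU e P = {}) \<and> (\<forall>f. eB e f = {})"

lemma split2_empty_env: "split2 e e (empty_env e)"
  by (auto simp: split2_def empty_env_def)

lemma is_empty_env_empty_env: "is_empty_env (empty_env e)"
  by (simp add: is_empty_env_def empty_env_def)

lemma split2_is_empty_env: "split2 e e1 e2 \<Longrightarrow> is_empty_env e2 \<Longrightarrow> e1 = e"
  by (rule env.equality) (auto simp: split2_def is_empty_env_def)

text \<open>Unlike \<^const>\<open>star_list\<close>, the empty list denotes the empty environment, which makes
  concatenation and permutation invariance hold without side conditions.\<close>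
fun sat_stars :: "('u,'b) form list \<Rightarrow> ('d,'u,'b) assn" where
  "sat_stars [] e = is_empty_env e"
| "sat_stars (G # Gs) e = (\<exists>e1 e2. split2 e e1 e2 \<and> sat G e1 \<and> sat_stars Gs e2)"

lemma sat_stars_append:
  "sat_stars (Gs @ Hs) e \<longleftrightarrow> (\<exists>e1 e2. split2 e e1 e2 \<and> sat_stars Gs e1 \<and> sat_stars Hs e2)"
proof (induction Gs arbitrary: e)
  case Nil
  have "sat_stars Hs e" if "split2 e e1 e2" "is_empty_env e1" "sat_stars Hs e2" for e1 e2
    using that split2_is_empty_env[OF split2_commute] by blast
  then show ?case using split2_empty_env split2_commute is_empty_env_empty_env by fastforce
next
  case (Cons G Gs)
  show ?case
  proof
    assume "sat_stars ((G # Gs) @ Hs) e"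
    then obtain e1 e2 e21 e22 where "split2 e e1 e2" "sat G e1" "split2 e2 e21 e22"
      "sat_stars Gs e21" "sat_stars Hs e22"
      using Cons.IH by auto
    then show "\<exists>e1 e2. split2 e e1 e2 \<and> sat_stars (G # Gs) e1 \<and> sat_stars Hs e2"
      using split2_assoc by fastforce
  next
    assume "\<exists>e1 e2. split2 e e1 e2 \<and> sat_stars (G # Gs) e1 \<and> sat_stars Hs e2"
    then obtain e1 e2 e11 e12 where "split2 e e1 e2" "split2 e1 e11 e12" "sat G e11"
      "sat_stars Gs e12" "sat_stars Hs e2"
      by auto
    then show "sat_stars ((G # Gs) @ Hs) e"
      using split2_assoc' Cons.IH by fastforce
  qed
qed

lemma sat_stars_perm:
  fixes e :: "('d,'u,'b) env"
  shows "mset Gs = mset Hs \<Longrightarrow> sat_stars Gs e = sat_stars Hs e"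
proof (induction Gs arbitrary: Hs e)
  case Nil
  then show ?case by simp
next
  case (Cons G Gs)
  then obtain Hs1 Hs2 where Hs: "Hs = Hs1 @ G # Hs2"
    by (metis list.set_intros(1) set_mset_mset split_list)
  then have "mset Gs = mset (Hs2 @ Hs1)"
    using Cons.prems by simp
  then have "sat_stars Gs e' = sat_stars (Hs2 @ Hs1) e'" for e' :: "('d,'u,'b) env"
    using Cons.IH by blast
  moreover have "sat_stars Hs e = sat_stars ((G # Hs2) @ Hs1) e"
    unfolding Hs sat_stars_append by (blast dest: split2_commute)
  ultimately show ?case
    by simp
qed

lemma sat_star_list: "Gs \<noteq> [] \<Longrightarrow> sat (star_list Gs) e = sat_stars Gs e"
proof (induction Gs arbitrary: e rule: star_list.induct)
  case (2 G)
  have "sat G e" if "split2 e e1 e2" "sat G e1" "is_empty_env e2" for e1 e2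
    using that split2_is_empty_env by blast
  then show ?case
    using split2_empty_env is_empty_env_empty_env by fastforce
qed auto

fun atom_holds :: "('d,'u,'b) env \<Rightarrow> (nat \<Rightarrow> 'd) \<Rightarrow> ('u,'b) atom \<Rightarrow> bool" where
  "atom_holds e s (AU A u) \<longleftrightarrow> s u \<in> eU e (Orig A)"
| "atom_holds e s (AB f u v) \<longleftrightarrow> (s u, s v) \<in> eB e f"
| "atom_holds e s (AE u v) \<longleftrightarrow> s u = s v"

lemma sat_atom_form: "sat (atom_form a) e \<longleftrightarrow> atom_holds e (easg e) a"
  by (cases a) auto

lemma sat_conj_list: "sat (conj_list Gs) e \<longleftrightarrow> (\<forall>G\<in>set Gs. sat G e)"
  by (induction Gs rule: conj_list.induct) auto

lemma sat_conj_set: "finite S \<Longrightarrow> sat (conj_set S) e \<longleftrightarrow> (\<forall>l\<in>S. sat (lit_form l) e)"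
proof -
  assume "finite S"
  then have "set (SOME ls. set ls = S \<and> distinct ls) = S"
    by (metis (mono_tags, lifting) finite_distinct_list someI_ex)
  then show ?thesis
    by (simp add: conj_set_def sat_conj_list)
qed

definition relational_atoms :: "('u,'b) atom set \<Rightarrow> ('u,'b) atom set" where
  "relational_atoms A = {a \<in> A. \<not> is_eq_atom a}"

lemma finite_atoms_over: "finite V \<Longrightarrow> finite (atoms_over V :: ('u::finite,'b::finite) atom set)"
proof -
  assume "finite V"
  moreover have "atoms_over V = (\<lambda>(A,u). AU A u) ` (UNIV \<times> V) \<union>
      (\<lambda>(f,u,v). AB f u v) ` (UNIV \<times> V \<times> V) \<union> (\<lambda>(u,v). AE u v) ` (V \<times> V)"
    unfolding atoms_over_def by (auto simp: image_iff)
  ultimately show ?thesis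
    by (metis finite_Un finite_SigmaI finite_UNIV finite_imageI)
qed

lemma complete_over_finite:
  assumes "finite A" "complete_over A S"
  shows "finite S"
proof (rule finite_subset)
  show "S \<subseteq> PosL ` A \<union> NegL ` A"
  proof
    fix l
    assume "l \<in> S"
    then show "l \<in> PosL ` A \<union> NegL ` A"
      using assms(2) unfolding complete_over_def by (cases l) auto
  qed
qed (use assms(1) in simp)

lemma Ball_atoms_by_kind:
  "(\<forall>a\<in>A. P a) \<longleftrightarrow> (\<forall>u v. AE u v \<in> A \<longrightarrow> P (AE u v)) \<and> (\<forall>a\<in>relational_atoms A. P a)"
proof -
  have "P a" if "a \<in> A" "\<forall>u v. AE u v \<in> A \<longrightarrow> P (AE u v)" "\<forall>a\<in>relational_atoms A. P a" for a
  proof (cases "is_eq_atom a")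
    case True
    then obtain u v where "a = AE u v"
      by (cases a) auto
    then show ?thesis
      using that by blast
  next
    case False
    then show ?thesis
      using that by (simp add: relational_atoms_def)
  qed
  then show ?thesis
    unfolding relational_atoms_def by blast
qed

lemma posset_complete_over: "complete_over A S \<Longrightarrow> posset S \<subseteq> relational_atoms A"
  unfolding complete_over_def posset_def relational_atoms_def by force

lemma sat_conj_set_complete_over_atoms:
  assumes "finite A" "complete_over A S"
  shows "sat (conj_set S) e \<longleftrightarrow> (\<forall>a\<in>A. atom_holds e (easg e) a \<longleftrightarrow> PosL a \<in> S)"
proof -
  have lits: "lit_atom l \<in> A" if "l \<in> S" for l
    using assms(2) that unfolding complete_over_def by blast
  have pos_neg: "PosL a \<in> S \<longleftrightarrow> NegL a \<notin> S" if "a \<in> A" for a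
    using assms(2) that unfolding complete_over_def by blast
  show ?thesis
  proof
    assume "sat (conj_set S) e"
    then have "\<forall>l\<in>S. sat (lit_form l) e"
      using sat_conj_set[OF complete_over_finite[OF assms]] by blast
    then show "\<forall>a\<in>A. atom_holds e (easg e) a \<longleftrightarrow> PosL a \<in> S"
      using pos_neg by (force simp: sat_atom_form)
  next
    assume holds: "\<forall>a\<in>A. atom_holds e (easg e) a \<longleftrightarrow> PosL a \<in> S"
    have "sat (lit_form l) e" if "l \<in> S" for l
      using that lits[OF that] holds pos_neg by (cases l) (auto simp: sat_atom_form)
    then show "sat (conj_set S) e"
      using sat_conj_set[OF complete_over_finite[OF assms]] by blast
  qed
qed

lemma sat_conj_set_complete_over:
  assumes "finite A" "complete_over A S"
  shows "sat (conj_set S) e \<longleftrightarrow>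
    (\<forall>u v. AE u v \<in> A \<longrightarrow> (easg e u = easg e v \<longleftrightarrow> u = v)) \<and>
    {a \<in> relational_atoms A. atom_holds e (easg e) a} = posset S"
proof -
  have eqs: "PosL (AE u v) \<in> S \<longleftrightarrow> u = v" if "AE u v \<in> A" for u v
    using assms(2) that unfolding complete_over_def by blast
  have rels: "PosL a \<in> S \<longleftrightarrow> a \<in> posset S" if "a \<in> relational_atoms A" for a
    using that unfolding relational_atoms_def posset_def by simp
  have "sat (conj_set S) e \<longleftrightarrow>
      (\<forall>u v. AE u v \<in> A \<longrightarrow> (easg e u = easg e v \<longleftrightarrow> u = v)) \<and>
      (\<forall>a\<in>relational_atoms A. atom_holds e (easg e) a \<longleftrightarrow> a \<in> posset S)"
    unfolding sat_conj_set_complete_over_atoms[OF assms] Ball_atoms_by_kind[of A]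
    using eqs rels by auto
  moreover have "(\<forall>a\<in>relational_atoms A. atom_holds e (easg e) a \<longleftrightarrow> a \<in> posset S) \<longleftrightarrow>
      {a \<in> relational_atoms A. atom_holds e (easg e) a} = posset S"
    using posset_complete_over[OF assms(2)] by auto
  ultimately show ?thesis
    by simp
qed

lemma complete_over_unique:
  assumes "complete_over A S" "complete_over A S'" "posset S = posset S'"
  shows "S = S'"
proof -
  have "PosL a \<in> S \<longleftrightarrow> PosL a \<in> S'" if "a \<in> A" for a
    using assms that unfolding complete_over_def posset_def
    by (cases a) auto
  then show ?thesis
    using assms(1,2) unfolding complete_over_def
    by (metis lit.exhaust lit_atom.simps subsetI subset_antisym)
qed

lemma complete_over_exists:
  fixes A :: "('u,'b) atom set"
  assumes "P \<subseteq> relational_atoms A"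
  shows "\<exists>S. complete_over A S \<and> posset S = P"
proof -
  define Q where "Q a \<longleftrightarrow> a \<in> P \<or> (\<exists>u. a = AE u u)" for a :: "('u,'b) atom"
  define S where "S = {PosL a | a. a \<in> A \<and> Q a} \<union> {NegL a | a. a \<in> A \<and> \<not> Q a}"
  have "complete_over A S \<and> posset S = P"
    using assms unfolding complete_over_def posset_def relational_atoms_def S_def Q_def
    by auto
  then show ?thesis ..
qed

lemma complete_over_The:
  assumes "P \<subseteq> relational_atoms A"
  shows "complete_over A (THE S. complete_over A S \<and> posset S = P)"
    and "posset (THE S. complete_over A S \<and> posset S = P) = P"
proof -
  obtain S where S: "complete_over A S \<and> posset S = P"
    using complete_over_exists[OF assms] ..
  have "(THE S. complete_over A S \<and> posset S = P) = S"
    using S complete_over_unique by (rule_tac the_equality) blast+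
  then show "complete_over A (THE S. complete_over A S \<and> posset S = P)"
    and "posset (THE S. complete_over A S \<and> posset S = P) = P"
    using S by simp_all
qed

lemma AE_in_atoms_over [simp]: "AE u v \<in> atoms_over V \<longleftrightarrow> u \<in> V \<and> v \<in> V"
  by (auto simp: atoms_over_def)

definition x_atoms :: "nat list \<Rightarrow> nat \<Rightarrow> ('u,'b) atom set" where
  "x_atoms xs x = {a \<in> atoms_over (insert x (set xs)). x \<in> atom_vars a}"

lemma mem_ext_iff: "T \<in> ext xs x \<longleftrightarrow> complete_over (x_atoms xs x) T"
  by (simp add: ext_def x_atoms_def)

lemma finite_x_atoms: "finite (x_atoms xs x :: ('u::finite,'b::finite) atom set)"
  by (rule finite_subset[OF _ finite_atoms_over[of "insert x (set xs)"]]) (auto simp: x_atoms_def)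

lemma posset_ext: "T \<in> ext xs x \<Longrightarrow> posset T \<subseteq> relational_atoms (x_atoms xs x)"
  by (simp add: mem_ext_iff posset_complete_over)

lemma posset_gccat: "is_gccat xs F \<Longrightarrow> posset F \<subseteq> relational_atoms (atoms_over (set xs))"
  by (simp add: is_gccat_def posset_complete_over)

lemma oplus_ext:
  assumes "T1 \<in> ext xs x" "T2 \<in> ext xs x"
  shows "oplus xs x T1 T2 \<in> ext xs x" and "posset (oplus xs x T1 T2) = posset T1 \<union> posset T2"
  using complete_over_The[of "posset T1 \<union> posset T2" "x_atoms xs x"]
    posset_ext[OF assms(1)] posset_ext[OF assms(2)]
  by (simp_all add: oplus_def mem_ext_iff)

lemma otimes_gccat:
  assumes "is_gccat xs F1" "is_gccat xs F2"
  shows "is_gccat xs (otimes xs F1 F2)" and "posset (otimes xs F1 F2) = posset F1 \<union> posset F2"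
  using complete_over_The[of "posset F1 \<union> posset F2" "atoms_over (set xs)"]
    posset_gccat[OF assms(1)] posset_gccat[OF assms(2)]
  by (simp_all add: otimes_def is_gccat_def)

definition profile :: "nat list \<Rightarrow> ('d,'u,'b) env \<Rightarrow> ('u,'b) atom set" where
  "profile xs e = {a \<in> relational_atoms (atoms_over (set xs)). atom_holds e (easg e) a}"

definition profile_at :: "nat list \<Rightarrow> nat \<Rightarrow> ('d,'u,'b) env \<Rightarrow> 'd \<Rightarrow> ('u,'b) atom set" where
  "profile_at xs x e d = {a \<in> relational_atoms (x_atoms xs x). atom_holds e ((easg e)(x := d)) a}"

definition outside :: "nat list \<Rightarrow> ('d,'u,'b) env \<Rightarrow> 'd set" where
  "outside xs e = edom e - easg e ` set xs"

definition marked :: "('d,'u,'b) env \<Rightarrow> 'd \<Rightarrow> nat set \<Rightarrow> bool" where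
  "marked e d m \<longleftrightarrow> (d \<in> eU e B1 \<longleftrightarrow> 1 \<in> m) \<and> (d \<in> eU e B2 \<longleftrightarrow> 2 \<in> m)"

definition witnesses :: "nat list \<Rightarrow> nat \<Rightarrow> ('d,'u,'b) env \<Rightarrow> nat set \<Rightarrow> ('u,'b) lit set \<Rightarrow> 'd set" where
  "witnesses xs x e m T = {d \<in> outside xs e. profile_at xs x e d = posset T \<and> marked e d m}"

lemma upd_simps [simp]:
  "easg (upd e v d) = (easg e)(v := d)" "edom (upd e v d) = edom e"
  "eU (upd e v d) = eU e" "eB (upd e v d) = eB e"
  by (simp_all add: upd_def)

lemma atom_holds_upd [simp]: "atom_holds (upd e v d) s a \<longleftrightarrow> atom_holds e s a"
  by (cases a) simp_all

lemma sat_conj_set_gccat: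
  assumes "is_gccat xs (F :: ('u::finite,'b::finite) lit set)"
  shows "sat (conj_set F) e \<longleftrightarrow> inj_on (easg e) (set xs) \<and> profile xs e = posset F"
  using sat_conj_set_complete_over[OF finite_atoms_over assms[unfolded is_gccat_def]]
  by (auto simp: profile_def inj_on_def)

lemma sat_conj_set_ext:
  assumes "T \<in> ext xs (x :: nat)" "x \<notin> set xs" "d \<notin> easg e ` set xs"
  shows "sat (conj_set (T :: ('u::finite,'b::finite) lit set)) (upd e x d) \<longleftrightarrow>
    profile_at xs x e d = posset T"
proof -
  have "((easg e)(x := d)) u = ((easg e)(x := d)) v \<longleftrightarrow> u = v"
    if "AE u v \<in> (x_atoms xs x :: ('u,'b) atom set)" for u v
    using that assms(2,3) by (auto simp: x_atoms_def)
  moreover have "sat (conj_set T) (upd e x d) \<longleftrightarrow>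
      (\<forall>u v. AE u v \<in> (x_atoms xs x :: ('u,'b) atom set) \<longrightarrow>
        (((easg e)(x := d)) u = ((easg e)(x := d)) v \<longleftrightarrow> u = v)) \<and>
      profile_at xs x e d = posset T"
    using sat_conj_set_complete_over[OF finite_x_atoms assms(1)[unfolded mem_ext_iff],
        of "upd e x d"]
    by (simp add: profile_at_def del: fun_upd_apply)
  ultimately show ?thesis
    by blast
qed

lemma sat_mark: "sat (mark m x) (upd e x d) \<longleftrightarrow> marked e d m"
  by (auto simp: mark_def marked_def)

lemma sat_E0: "sat (E0 xs :: ('u::finite,'b::finite) form) e \<longleftrightarrow>
    inj_on (easg e) (set xs) \<and> profile xs e = {}"
proof -
  let ?F = "THE F. is_gccat xs F \<and> posset F = ({} :: ('u,'b) atom set)"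
  have "is_gccat xs ?F" "posset ?F = {}"
    using complete_over_The[of "{}" "atoms_over (set xs)"] unfolding is_gccat_def by simp_all
  then show ?thesis
    unfolding E0_def by (simp add: sat_conj_set_gccat)
qed

context
  fixes xs :: "nat list" and x :: nat
  assumes x_fresh: "x \<notin> set xs"
begin

lemma sat_delta: "sat (delta xs x) (upd e x d) \<longleftrightarrow> d \<notin> easg e ` set xs"
  unfolding delta_def sat_conj_list using x_fresh by auto

lemma sat_empx: "d \<notin> easg e ` set xs \<Longrightarrow>
    sat (empx xs x :: ('u::finite,'b::finite) form) (upd e x d) \<longleftrightarrow> profile_at xs x e d = {}"
proof -
  assume "d \<notin> easg e ` set xs"
  moreover let ?T = "THE T. T \<in> ext xs x \<and> posset T = ({} :: ('u,'b) atom set)"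
  have "?T \<in> ext xs x" "posset ?T = {}"
    using complete_over_The[of "{}" "x_atoms xs x"] unfolding mem_ext_iff by simp_all
  ultimately show ?thesis
    unfolding empx_def by (simp add: sat_conj_set_ext[OF _ x_fresh])
qed

lemma sat_GE: "sat (GE xs x :: ('u::finite,'b::finite) form) e \<longleftrightarrow>
    inj_on (easg e) (set xs) \<and> profile xs e = {} \<and>
    (\<forall>d\<in>outside xs e. profile_at xs x e d = {} \<and> marked e d {})"
  unfolding GE_def outside_def by (auto simp: sat_E0 sat_delta sat_empx sat_mark)

lemma sat_KF: "is_gccat xs F \<Longrightarrow> sat (KF xs x F :: ('u::finite,'b::finite) form) e \<longleftrightarrow>
    inj_on (easg e) (set xs) \<and> profile xs e = posset F \<and>
    (\<forall>d\<in>outside xs e. profile_at xs x e d = {} \<and> marked e d {})"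
  unfolding KF_def outside_def by (auto simp: sat_conj_set_gccat sat_delta sat_empx sat_mark)

lemma sat_AnyF: "T \<in> ext xs x \<Longrightarrow> sat (AnyF xs x m T :: ('u::finite,'b::finite) form) e \<longleftrightarrow>
    inj_on (easg e) (set xs) \<and> profile xs e = {} \<and>
    (\<forall>d\<in>outside xs e. (profile_at xs x e d = posset T \<and> marked e d m) \<or>
                      (profile_at xs x e d = {} \<and> marked e d {}))"
  unfolding AnyF_def outside_def
  by (auto simp: sat_E0 sat_delta sat_empx sat_mark sat_conj_set_ext[OF _ x_fresh])

lemma sat_OneF: "T \<in> ext xs x \<Longrightarrow> sat (OneF xs x m T :: ('u::finite,'b::finite) form) e \<longleftrightarrow>
    sat (AnyF xs x m T) e \<and> card (witnesses xs x e m T) = 1"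
proof -
  assume T: "T \<in> ext xs x"
  have "{d \<in> edom e. sat (Conj (delta xs x) (Conj (conj_set T) (mark m x))) (upd e x d)} =
      witnesses xs x e m T"
    using T
    by (auto simp: witnesses_def outside_def sat_delta sat_mark sat_conj_set_ext[OF _ x_fresh])
  then show ?thesis
    unfolding OneF_def by simp
qed

lemma sat_AnyF_witnesses:
  fixes T :: "('u::finite,'b::finite) lit set"
  assumes T: "T \<in> ext xs x" and m: "1 \<in> m \<or> 2 \<in> m"
    and inj: "inj_on (easg e) (set xs)" and prof: "profile xs e = {}" and D: "D \<subseteq> outside xs e"
    and each: "\<And>d. d \<in> outside xs e \<Longrightarrow>
      (d \<in> D \<longrightarrow> profile_at xs x e d = posset T \<and> marked e d m) \<and>
      (d \<notin> D \<longrightarrow> profile_at xs x e d = {} \<and> marked e d {})"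
  shows "sat (AnyF xs x m T) e" and "witnesses xs x e m T = D"
proof -
  show "sat (AnyF xs x m T) e"
    unfolding sat_AnyF[OF T] using inj prof each by blast
  show "witnesses xs x e m T = D"
    using D each m unfolding witnesses_def marked_def by auto
qed

end

section \<open>Splitting environments\<close>

lemma split2_same:
  "split2 e e1 e2 \<Longrightarrow> easg e1 = easg e \<and> edom e1 = edom e \<and> outside xs e1 = outside xs e"
  by (simp add: split2_def outside_def)

lemma split2_eU: "split2 e e1 e2 \<Longrightarrow> d \<in> eU e P \<longleftrightarrow> d \<in> eU e1 P \<or> d \<in> eU e2 P"
  by (auto simp: split2_def)

lemma atom_holds_split2:
  "split2 e e1 e2 \<Longrightarrow> \<not> is_eq_atom a \<Longrightarrow> atom_holds e s a \<longleftrightarrow> atom_holds e1 s a \<or> atom_holds e2 s a"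
  by (cases a) (auto simp: split2_def)

lemma profile_split2:
  assumes "split2 e e1 e2"
  shows "profile xs e = profile xs e1 \<union> profile xs e2"
    and "profile_at xs x e d = profile_at xs x e1 d \<union> profile_at xs x e2 d"
proof -
  have "easg e1 = easg e" "easg e2 = easg e"
    using assms by (simp_all add: split2_def)
  then show "profile xs e = profile xs e1 \<union> profile xs e2"
    and "profile_at xs x e d = profile_at xs x e1 d \<union> profile_at xs x e2 d"
    using atom_holds_split2[OF assms] unfolding profile_def profile_at_def relational_atoms_def
    by auto
qed

datatype ('u,'d,'b) ground_fact = GU "'u usym" 'd | GB 'b 'd 'd

text \<open>Equality atoms denote no ground fact; \<open>ground\<close> is only applied to relational atoms.\<close>
fun ground :: "(nat \<Rightarrow> 'd) \<Rightarrow> ('u,'b) atom \<Rightarrow> ('u,'d,'b) ground_fact" where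
  "ground s (AU A u) = GU (Orig A) (s u)"
| "ground s (AB f u v) = GB f (s u) (s v)"
| "ground s (AE u v) = undefined"

definition restrict_env :: "('d,'u,'b) env \<Rightarrow> ('u,'d,'b) ground_fact set \<Rightarrow> ('d,'u,'b) env" where
  "restrict_env e S = e\<lparr>eU := \<lambda>P. {d \<in> eU e P. GU P d \<in> S},
                        eB := \<lambda>f. {(p, q) \<in> eB e f. GB f p q \<in> S}\<rparr>"

lemma split2_restrict_env: "split2 e (restrict_env e S) (restrict_env e (- S))"
  unfolding split2_def restrict_env_def by auto

lemma restrict_env_simps [simp]:
  "easg (restrict_env e S) = easg e" "edom (restrict_env e S) = edom e"
  "eU (restrict_env e S) P = {d \<in> eU e P. GU P d \<in> S}"
  "outside xs (restrict_env e S) = outside xs e"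
  by (simp_all add: restrict_env_def outside_def)

lemma atom_holds_restrict_env:
  "\<not> is_eq_atom a \<Longrightarrow> atom_holds (restrict_env e S) s a \<longleftrightarrow> atom_holds e s a \<and> ground s a \<in> S"
  by (cases a) (auto simp: restrict_env_def)

lemma profile_restrict_env:
  "profile xs (restrict_env e S) = {a \<in> profile xs e. ground (easg e) a \<in> S}"
  using atom_holds_restrict_env unfolding profile_def relational_atoms_def by auto

lemma profile_at_restrict_env:
  "profile_at xs x (restrict_env e S) d =
    {a \<in> profile_at xs x e d. ground ((easg e)(x := d)) a \<in> S}"
  using atom_holds_restrict_env unfolding profile_at_def relational_atoms_def by auto

lemma ground_inj_on:
  assumes "inj_on s V" "a \<in> relational_atoms (atoms_over V)" "a' \<in> relational_atoms (atoms_over V)"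
    and "ground s a = ground s a'"
  shows "a = a'"
  using assms by (cases a; cases a') (auto simp: relational_atoms_def atoms_over_def inj_on_def)

fun fact_elems :: "('u,'d,'b) ground_fact \<Rightarrow> 'd set" where
  "fact_elems (GU P d) = {d}"
| "fact_elems (GB f p q) = {p, q}"

lemma fact_elems_ground_upd:
  assumes "a \<in> relational_atoms (x_atoms xs x)"
  shows "d \<in> fact_elems (ground (s(x := d)) a)"
    and "fact_elems (ground (s(x := d)) a) \<subseteq> insert d (s ` set xs)"
  using assms by (cases a; auto simp: relational_atoms_def x_atoms_def atoms_over_def)+

lemma ground_upd_inj:
  assumes "x \<notin> set xs" "inj_on s (set xs)" "d \<notin> s ` set xs" "d' \<notin> s ` set xs"
    and "a \<in> relational_atoms (x_atoms xs x)" "a' \<in> relational_atoms (x_atoms xs x)"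
    and "ground (s(x := d)) a = ground (s(x := d')) a'"
  shows "d = d'" and "a = a'"
proof -
  show "d = d'"
    using fact_elems_ground_upd[OF assms(5), where d = d and s = s]
      fact_elems_ground_upd[OF assms(6), where d = d' and s = s]
      assms(3,7) by auto
  have "inj_on (s(x := d)) (insert x (set xs))"
    using assms(1-3) by (simp add: inj_on_def) (metis image_eqI)
  moreover have
    "relational_atoms (x_atoms xs x) \<subseteq> relational_atoms (atoms_over (insert x (set xs)))"
    by (auto simp: relational_atoms_def x_atoms_def)
  ultimately show "a = a'"
    using ground_inj_on assms(5-7) \<open>d = d'\<close> by blast
qed

lemma ground_not_mark: "a \<in> relational_atoms A \<Longrightarrow> ground s a \<noteq> GU B1 d \<and> ground s a \<noteq> GU B2 d"
  by (cases a) (auto simp: relational_atoms_def)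

definition moved_facts ::
  "nat list \<Rightarrow> nat \<Rightarrow> ('d,'u,'b) env \<Rightarrow> 'd set \<Rightarrow> ('u,'b) atom set \<Rightarrow> ('u,'d,'b) ground_fact set"
  where "moved_facts xs x e D P = (\<Union>d\<in>D. ground ((easg e)(x := d)) ` P) \<union> GU B1 ` D"

lemma mem_moved_facts:
  fixes e :: "('d,'u,'b) env"
  assumes "x \<notin> set xs" "inj_on (easg e) (set xs)" "D \<subseteq> outside xs e"
    and "P \<subseteq> relational_atoms (x_atoms xs x)" and "d \<in> outside xs e"
  shows "a \<in> relational_atoms (x_atoms xs x) \<Longrightarrow>
      ground ((easg e)(x := d)) a \<in> moved_facts xs x e D P \<longleftrightarrow> d \<in> D \<and> a \<in> P"
    and "GU B1 d \<in> moved_facts xs x e D P \<longleftrightarrow> d \<in> D"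
    and "GU B2 d \<notin> moved_facts xs x e D P"
proof -
  have out: "d' \<notin> easg e ` set xs" if "d' \<in> outside xs e" for d'
    using that by (simp add: outside_def)
  have no_mark: "GU B1 d' \<notin> ground s ` P \<and> GU B2 d' \<notin> ground s ` P" for s :: "nat \<Rightarrow> 'd" and d'
    using ground_not_mark[of _ "x_atoms xs x" s d'] assms(4) by (auto dest: sym)
  show "ground ((easg e)(x := d)) a \<in> moved_facts xs x e D P \<longleftrightarrow> d \<in> D \<and> a \<in> P"
    if a: "a \<in> relational_atoms (x_atoms xs x)"
  proof
    assume g: "ground ((easg e)(x := d)) a \<in> moved_facts xs x e D P"
    have "ground ((easg e)(x := d)) a \<notin> GU B1 ` D"
      using ground_not_mark[OF a, of "(easg e)(x := d)"] by blast
    then obtain d' a' where "d' \<in> D" "a' \<in> P"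
      and eq: "ground ((easg e)(x := d)) a = ground ((easg e)(x := d')) a'"
      using g unfolding moved_facts_def by blast
    moreover have "d' \<notin> easg e ` set xs" "a' \<in> relational_atoms (x_atoms xs x)"
      using \<open>d' \<in> D\<close> \<open>a' \<in> P\<close> assms(3,4) out by blast+
    ultimately show "d \<in> D \<and> a \<in> P"
      using ground_upd_inj[OF assms(1,2) out[OF assms(5)] _ a _ eq] by blast
  qed (auto simp: moved_facts_def)
  show "GU B1 d \<in> moved_facts xs x e D P \<longleftrightarrow> d \<in> D" and "GU B2 d \<notin> moved_facts xs x e D P"
    using no_mark unfolding moved_facts_def by auto
qed

lemma profile_at_relational: "profile_at xs x e d \<subseteq> relational_atoms (x_atoms xs x)"
  by (auto simp: profile_at_def)

lemma restrict_env_moved_facts: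
  fixes e :: "('d,'u,'b) env"
  assumes "x \<notin> set xs" "inj_on (easg e) (set xs)" "D \<subseteq> outside xs e"
    and "P \<subseteq> relational_atoms (x_atoms xs x)" and "d \<in> outside xs e"
  defines "e1 \<equiv> restrict_env e (moved_facts xs x e D P)"
    and "e2 \<equiv> restrict_env e (- moved_facts xs x e D P)"
  shows "profile_at xs x e1 d = {a \<in> profile_at xs x e d. d \<in> D \<and> a \<in> P}"
    and "profile_at xs x e2 d = {a \<in> profile_at xs x e d. \<not> (d \<in> D \<and> a \<in> P)}"
    and "marked e1 d m \<longleftrightarrow> (d \<in> eU e B1 \<and> d \<in> D \<longleftrightarrow> 1 \<in> m) \<and> 2 \<notin> m"
    and "marked e2 d m \<longleftrightarrow> (d \<in> eU e B1 \<and> d \<notin> D \<longleftrightarrow> 1 \<in> m) \<and> (d \<in> eU e B2 \<longleftrightarrow> 2 \<in> m)"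
  using mem_moved_facts[OF assms(1-5)] profile_at_relational[of xs x e d]
  unfolding e1_def e2_def profile_at_restrict_env marked_def by auto

text \<open>The witness equations make this the inverse of rule (1) as well as of rule (4).\<close>
lemma split_AnyF_oplus:
  fixes T1 T2 :: "('u::finite,'b::finite) lit set" and e :: "('d,'u,'b) env"
  assumes x_fresh: "x \<notin> set xs" and T1: "T1 \<in> ext xs x" and T2: "T2 \<in> ext xs x"
    and disj: "posset T1 \<inter> posset T2 = {}"
    and Any: "sat (AnyF xs x {1,2} (oplus xs x T1 T2)) e"
  obtains e1 e2 where "split2 e e1 e2" "sat (AnyF xs x {1} T1) e1" "sat (AnyF xs x {2} T2) e2"
    and "witnesses xs x e1 {1} T1 = witnesses xs x e {1,2} (oplus xs x T1 T2)"
    and "witnesses xs x e2 {2} T2 = witnesses xs x e {1,2} (oplus xs x T1 T2)"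
proof -
  let ?T = "oplus xs x T1 T2"
  define D where "D = witnesses xs x e {1,2} ?T"
  define S where "S = moved_facts xs x e D (posset T1)"
  define e1 e2 where "e1 = restrict_env e S" and "e2 = restrict_env e (- S)"
  have T: "?T \<in> ext xs x" "posset ?T = posset T1 \<union> posset T2"
    using oplus_ext[OF T1 T2] by simp_all
  have inj: "inj_on (easg e) (set xs)" and "profile xs e = {}"
    and each: "\<And>d. d \<in> outside xs e \<Longrightarrow> (profile_at xs x e d = posset ?T \<and> marked e d {1,2}) \<or>
                                     (profile_at xs x e d = {} \<and> marked e d {})"
    using Any by (simp_all add: sat_AnyF[OF x_fresh T(1)])
  then have "profile xs e1 = {}" "profile xs e2 = {}"
    by (simp_all add: e1_def e2_def profile_restrict_env)
  have D_outside: "D \<subseteq> outside xs e"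
    by (auto simp: D_def witnesses_def)
  note moved = restrict_env_moved_facts[OF x_fresh inj D_outside posset_ext[OF T1],
      folded S_def, folded e1_def e2_def]
  have in_D: "profile_at xs x e d = posset T1 \<union> posset T2 \<and> d \<in> eU e B1 \<and> d \<in> eU e B2"
    if "d \<in> D" for d
    using that T(2) unfolding D_def witnesses_def marked_def by auto
  have not_in_D: "profile_at xs x e d = {} \<and> d \<notin> eU e B1 \<and> d \<notin> eU e B2"
    if "d \<in> outside xs e" "d \<notin> D" for d
    using each[OF that(1)] that unfolding D_def witnesses_def marked_def by auto
  have same: "easg e1 = easg e" "easg e2 = easg e" "outside xs e1 = outside xs e"
    "outside xs e2 = outside xs e"
    by (simp_all add: e1_def e2_def)
  have left: "(d \<in> D \<longrightarrow> profile_at xs x e1 d = posset T1 \<and> marked e1 d {1}) \<and>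
      (d \<notin> D \<longrightarrow> profile_at xs x e1 d = {} \<and> marked e1 d {})"
    and right: "(d \<in> D \<longrightarrow> profile_at xs x e2 d = posset T2 \<and> marked e2 d {2}) \<and>
      (d \<notin> D \<longrightarrow> profile_at xs x e2 d = {} \<and> marked e2 d {})" if "d \<in> outside xs e" for d
    using moved[OF that] in_D[of d] not_in_D[OF that] disj by auto
  note Any1 = sat_AnyF_witnesses[OF x_fresh T1 _ _ \<open>profile xs e1 = {}\<close>, of "{1}" D]
    and Any2 = sat_AnyF_witnesses[OF x_fresh T2 _ _ \<open>profile xs e2 = {}\<close>, of "{2}" D]
  have "split2 e e1 e2"
    unfolding e1_def e2_def by (rule split2_restrict_env)
  moreover have "sat (AnyF xs x {1} T1) e1" "witnesses xs x e1 {1} T1 = D"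
    using Any1 inj D_outside left unfolding same by simp_all
  moreover have "sat (AnyF xs x {2} T2) e2" "witnesses xs x e2 {2} T2 = D"
    using Any2 inj D_outside right unfolding same by simp_all
  ultimately show ?thesis
    using that unfolding D_def by blast
qed

lemma split_OneF_oplus:
  fixes T1 T2 :: "('u::finite,'b::finite) lit set" and e :: "('d,'u,'b) env"
  assumes x_fresh: "x \<notin> set xs" and T1: "T1 \<in> ext xs x" and T2: "T2 \<in> ext xs x"
    and disj: "posset T1 \<inter> posset T2 = {}"
    and One: "sat (OneF xs x {1,2} (oplus xs x T1 T2)) e"
  obtains e1 e2 where "split2 e e1 e2" "sat (OneF xs x {1} T1) e1" "sat (OneF xs x {2} T2) e2"
proof -
  have T: "oplus xs x T1 T2 \<in> ext xs x"
    using oplus_ext[OF T1 T2] by simp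
  obtain e1 e2 where "split2 e e1 e2" "sat (AnyF xs x {1} T1) e1" "sat (AnyF xs x {2} T2) e2"
    "witnesses xs x e1 {1} T1 = witnesses xs x e {1,2} (oplus xs x T1 T2)"
    "witnesses xs x e2 {2} T2 = witnesses xs x e {1,2} (oplus xs x T1 T2)"
    using split_AnyF_oplus[OF x_fresh T1 T2 disj] One by (auto simp: sat_OneF[OF x_fresh T])
  then show ?thesis
    using that One
    by (simp add: sat_OneF[OF x_fresh T] sat_OneF[OF x_fresh T1] sat_OneF[OF x_fresh T2])
qed

lemma split_KF_otimes:
  fixes F1 F2 :: "('u::finite,'b::finite) lit set" and e :: "('d,'u,'b) env"
  assumes x_fresh: "x \<notin> set xs" and F1: "is_gccat xs F1" and F2: "is_gccat xs F2"
    and disj: "posset F1 \<inter> posset F2 = {}"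
    and K: "sat (KF xs x (otimes xs F1 F2)) e"
  obtains e1 e2 where "split2 e e1 e2" "sat (KF xs x F1) e1" "sat (KF xs x F2) e2"
proof -
  define S where "S = ground (easg e) ` posset F1"
  define e1 e2 where "e1 = restrict_env e S" and "e2 = restrict_env e (- S)"
  have inj: "inj_on (easg e) (set xs)"
    and prof: "profile xs e = posset F1 \<union> posset F2"
    and blank: "\<And>d. d \<in> outside xs e \<Longrightarrow> profile_at xs x e d = {} \<and> marked e d {}"
    using K otimes_gccat[OF F1 F2] by (simp_all add: sat_KF[OF x_fresh])
  have "ground (easg e) a \<in> S \<longleftrightarrow> a \<in> posset F1" if "a \<in> profile xs e" for a
    using that ground_inj_on[OF inj] posset_gccat[OF F1] unfolding S_def profile_def by blast
  then have "profile xs e1 = posset F1" "profile xs e2 = posset F2"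
    using prof disj by (auto simp: e1_def e2_def profile_restrict_env)
  moreover have "profile_at xs x e1 d = {} \<and> marked e1 d {}"
    and "profile_at xs x e2 d = {} \<and> marked e2 d {}"
    if "d \<in> outside xs e" for d
    using blank[OF that] by (auto simp: e1_def e2_def profile_at_restrict_env marked_def)
  ultimately have "sat (KF xs x F1) e1" "sat (KF xs x F2) e2"
    using inj by (auto simp: sat_KF[OF x_fresh F1] sat_KF[OF x_fresh F2] e1_def e2_def)
  moreover have "split2 e e1 e2"
    unfolding e1_def e2_def by (rule split2_restrict_env)
  ultimately show ?thesis
    using that by blast
qed

section \<open>Observational equivalence\<close>

fun wf_sconj :: "nat list \<Rightarrow> nat \<Rightarrow> ('u,'b) sconj \<Rightarrow> bool" where
  "wf_sconj xs x (SK F) \<longleftrightarrow> is_gccat xs F"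
| "wf_sconj xs x (SOne m T) \<longleftrightarrow> T \<in> ext xs x"
| "wf_sconj xs x (SAny m T) \<longleftrightarrow> T \<in> ext xs x"
| "wf_sconj xs x SFalse \<longleftrightarrow> True"
| "wf_sconj xs x SGE \<longleftrightarrow> True"

definition observably_equal :: "nat list \<Rightarrow> nat \<Rightarrow> ('d,'u,'b) env \<Rightarrow> ('d,'u,'b) env \<Rightarrow> bool"
  where
  "observably_equal xs x e e' \<longleftrightarrow> easg e' = easg e \<and> outside xs e' = outside xs e \<and>
     profile xs e' = profile xs e \<and>
     (\<forall>d\<in>outside xs e. profile_at xs x e' d = profile_at xs x e d \<and>
                       (\<forall>m. marked e' d m \<longleftrightarrow> marked e d m))"

lemma empty_env_simps [simp]:
  "easg (empty_env e) = easg e" "outside xs (empty_env e) = outside xs e"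
  "profile xs (empty_env e) = {}" "profile_at xs x (empty_env e) d = {}"
  "marked (empty_env e) d m \<longleftrightarrow> 1 \<notin> m \<and> 2 \<notin> m"
proof -
  have "\<not> atom_holds (empty_env e) s a" if "\<not> is_eq_atom a" for s a
    using that by (cases a) (simp_all add: empty_env_def)
  then show "profile xs (empty_env e) = {}" "profile_at xs x (empty_env e) d = {}"
    by (auto simp: profile_def profile_at_def relational_atoms_def)
qed (auto simp: empty_env_def outside_def marked_def)

context
  fixes xs :: "nat list" and x :: nat
  assumes x_fresh: "x \<notin> set xs"
begin

lemma sat_sform_observably_equal:
  fixes c :: "('u::finite,'b::finite) sconj"
  assumes "wf_sconj xs x c" "observably_equal xs x e e'"
  shows "sat (sform xs x c) e' \<longleftrightarrow> sat (sform xs x c) e"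
proof -
  have "witnesses xs x e' m T = witnesses xs x e m T" for m T
    using assms(2) by (auto simp: witnesses_def observably_equal_def)
  then show ?thesis
    using assms by (cases c)
      (auto simp: observably_equal_def sat_GE[OF x_fresh] sat_KF[OF x_fresh]
        sat_AnyF[OF x_fresh] sat_OneF[OF x_fresh])
qed

lemma inj_on_of_sat_sform:
  fixes c :: "('u::finite,'b::finite) sconj"
  shows "wf_sconj xs x c \<Longrightarrow> sat (sform xs x c) e \<Longrightarrow> inj_on (easg e) (set xs)"
  by (cases c)
    (auto simp: sat_GE[OF x_fresh] sat_KF[OF x_fresh] sat_AnyF[OF x_fresh] sat_OneF[OF x_fresh])

lemma sat_GE_empty_env:
  "inj_on (easg e) (set xs) \<Longrightarrow> sat (GE xs x :: ('u::finite,'b::finite) form) (empty_env e)"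
  by (simp add: sat_GE[OF x_fresh])

lemma observably_equal_GE_frame:
  assumes "split2 e e1 e2" and "sat (GE xs x :: ('u::finite,'b::finite) form) e2"
  shows "observably_equal xs x e e1"
proof -
  have "profile xs e2 = {}"
    and blank: "\<And>d. d \<in> outside xs e \<Longrightarrow> profile_at xs x e2 d = {} \<and> marked e2 d {}"
    using assms(2) split2_same[OF split2_commute[OF assms(1)]] by (simp_all add: sat_GE[OF x_fresh])
  then show ?thesis
    using profile_split2[OF assms(1)] split2_same[OF assms(1)] split2_eU[OF assms(1)]
    unfolding observably_equal_def marked_def by auto
qed

lemma sat_AnyF_split2:
  assumes T: "T \<in> ext xs x" and sp: "split2 e e1 e2"
    and Any1: "sat (AnyF xs x m T :: ('u::finite,'b::finite) form) e1"
    and Any2: "sat (AnyF xs x m T) e2"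
  shows "sat (AnyF xs x m T) e"
proof -
  have same: "easg e1 = easg e" "outside xs e1 = outside xs e" "outside xs e2 = outside xs e"
    using split2_same[OF sp] split2_same[OF split2_commute[OF sp]] by simp_all
  have "(profile_at xs x e d = posset T \<and> marked e d m) \<or>
      (profile_at xs x e d = {} \<and> marked e d {})" if d: "d \<in> outside xs e" for d
  proof -
    have "(profile_at xs x e1 d = posset T \<and> marked e1 d m) \<or>
        (profile_at xs x e1 d = {} \<and> marked e1 d {})"
      and "(profile_at xs x e2 d = posset T \<and> marked e2 d m) \<or>
        (profile_at xs x e2 d = {} \<and> marked e2 d {})"
      using Any1 Any2 d same by (simp_all add: sat_AnyF[OF x_fresh T])
    then show ?thesis
      using profile_split2(2)[OF sp, of xs x d] split2_eU[OF sp, of d B1] split2_eU[OF sp, of d B2]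
      unfolding marked_def by auto
  qed
  moreover have "inj_on (easg e) (set xs)" "profile xs e = {}"
    using Any1 Any2 same profile_split2(1)[OF sp, of xs] by (simp_all add: sat_AnyF[OF x_fresh T])
  ultimately show ?thesis
    by (simp add: sat_AnyF[OF x_fresh T])
qed

lemma sat_AnyF_of_GE:
  "T \<in> ext xs x \<Longrightarrow> sat (GE xs x :: ('u::finite,'b::finite) form) e \<Longrightarrow> sat (AnyF xs x m T) e"
  by (simp add: sat_GE[OF x_fresh] sat_AnyF[OF x_fresh])

lemma sat_AnyF_of_OneF:
  "T \<in> ext xs x \<Longrightarrow> sat (OneF xs x m T :: ('u::finite,'b::finite) form) e \<Longrightarrow>
    sat (AnyF xs x m T) e"
  by (simp add: sat_OneF[OF x_fresh])

end

section \<open>Backward soundness of the rewriting steps\<close>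

text \<open>A multiset of conjuncts denotes their spatial conjunction in any order; entailment between
  such conjunctions is the pointwise order \<open>\<le>\<close> on \<^typ>\<open>('d,'u,'b) assn\<close>.\<close>
definition sat_state :: "nat list \<Rightarrow> nat \<Rightarrow> ('u,'b) sconj multiset \<Rightarrow> ('d,'u,'b) assn" where
  "sat_state xs x M e \<longleftrightarrow> (\<exists>cs. mset cs = M \<and> sat_stars (map (sform xs x) cs) e)"

lemma sat_state_mset: "sat_state xs x (mset cs) e \<longleftrightarrow> sat_stars (map (sform xs x) cs) e"
  unfolding sat_state_def by (metis mset_map sat_stars_perm)

lemma sat_state_union:
  "sat_state xs x (A + B) e \<longleftrightarrow> (\<exists>e1 e2. split2 e e1 e2 \<and> sat_state xs x A e1 \<and> sat_state xs x B e2)"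
proof -
  obtain as bs where A: "A = mset as" and B: "B = mset bs"
    by (metis ex_mset)
  have "sat_state xs x (A + B) e \<longleftrightarrow> sat_stars (map (sform xs x) as @ map (sform xs x) bs) e"
    using sat_state_mset[of xs x "as @ bs"] by (simp add: A B)
  also have "\<dots> \<longleftrightarrow> (\<exists>e1 e2. split2 e e1 e2 \<and> sat_state xs x A e1 \<and> sat_state xs x B e2)"
    unfolding sat_stars_append A B sat_state_mset ..
  finally show ?thesis .
qed

lemma sat_state_single: "sat_state xs x {#c#} e \<longleftrightarrow> sat (sform xs x c) e"
proof -
  have "sat_state xs x {#c#} e \<longleftrightarrow> sat_stars [sform xs x c] e"
    using sat_state_mset[of xs x "[c]"] by simp
  also have "\<dots> \<longleftrightarrow> sat (star_list [sform xs x c]) e"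
    using sat_star_list[of "[sform xs x c]" e] by simp
  finally show ?thesis
    by simp
qed

lemma sat_state_pair:
  "sat_state xs x {#c, c'#} e \<longleftrightarrow>
    (\<exists>e1 e2. split2 e e1 e2 \<and> sat (sform xs x c) e1 \<and> sat (sform xs x c') e2)"
  using sat_state_union[of xs x "{#c#}" "{#c'#}"] by (simp add: sat_state_single add_mset_commute)

lemma sat_state_frame:
  assumes "sat_state xs x A \<le> (sat_state xs x B :: ('d,'u,'b) assn)"
  shows "sat_state xs x (N + A) \<le> (sat_state xs x (N + B) :: ('d,'u,'b) assn)"
  using assms unfolding le_fun_def le_bool_def sat_state_union by meson

lemma sat_state_frame_eq:
  assumes "sat_state xs x A = (sat_state xs x B :: ('d,'u,'b) assn)"
  shows "sat_state xs x (N + A) = (sat_state xs x (N + B) :: ('d,'u,'b) assn)"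
  by (intro ext) (simp add: sat_state_union assms)

context
  fixes xs :: "nat list" and x :: nat
  assumes x_fresh: "x \<notin> set xs"
begin

lemma rule1_backward:
  fixes T1 T2 :: "('u::finite,'b::finite) lit set"
  assumes "T1 \<in> ext xs x" "T2 \<in> ext xs x" "posset T1 \<inter> posset T2 = {}"
  shows "sat_state xs x {#SOne {1,2} (oplus xs x T1 T2)#} \<le>
    (sat_state xs x {#SOne {1} T1, SOne {2} T2#} :: ('d,'u,'b) assn)"
proof (rule predicate1I)
  fix e :: "('d,'u,'b) env"
  assume "sat_state xs x {#SOne {1,2} (oplus xs x T1 T2)#} e"
  then have "sat (OneF xs x {1,2} (oplus xs x T1 T2)) e"
    unfolding sat_state_single sform.simps .
  then obtain e1 e2 where "split2 e e1 e2" "sat (OneF xs x {1} T1) e1" "sat (OneF xs x {2} T2) e2"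
    by (rule split_OneF_oplus[OF x_fresh assms])
  then show "sat_state xs x {#SOne {1} T1, SOne {2} T2#} e"
    by (auto simp: sat_state_pair)
qed

lemma sat_state_AnyF_oplus:
  fixes T1 T2 :: "('u::finite,'b::finite) lit set"
  assumes "T1 \<in> ext xs x" "T2 \<in> ext xs x" "posset T1 \<inter> posset T2 = {}"
  shows "sat_state xs x {#SAny {1,2} (oplus xs x T1 T2)#} \<le>
    (sat_state xs x {#SAny {1} T1, SAny {2} T2#} :: ('d,'u,'b) assn)"
proof (rule predicate1I)
  fix e :: "('d,'u,'b) env"
  assume "sat_state xs x {#SAny {1,2} (oplus xs x T1 T2)#} e"
  then have "sat (AnyF xs x {1,2} (oplus xs x T1 T2)) e"
    unfolding sat_state_single sform.simps .
  then obtain e1 e2 where "split2 e e1 e2" "sat (AnyF xs x {1} T1) e1" "sat (AnyF xs x {2} T2) e2"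
    by (rule split_AnyF_oplus[OF x_fresh assms])
  then show "sat_state xs x {#SAny {1} T1, SAny {2} T2#} e"
    by (auto simp: sat_state_pair)
qed

lemma sat_state_KF_otimes:
  fixes F1 F2 :: "('u::finite,'b::finite) lit set"
  assumes "is_gccat xs F1" "is_gccat xs F2" "posset F1 \<inter> posset F2 = {}"
  shows "sat_state xs x {#SK (otimes xs F1 F2)#} \<le>
    (sat_state xs x {#SK F1, SK F2#} :: ('d,'u,'b) assn)"
proof (rule predicate1I)
  fix e :: "('d,'u,'b) env"
  assume "sat_state xs x {#SK (otimes xs F1 F2)#} e"
  then have "sat (KF xs x (otimes xs F1 F2)) e"
    unfolding sat_state_single sform.simps .
  then obtain e1 e2 where "split2 e e1 e2" "sat (KF xs x F1) e1" "sat (KF xs x F2) e2"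
    by (rule split_KF_otimes[OF x_fresh assms])
  then show "sat_state xs x {#SK F1, SK F2#} e"
    by (auto simp: sat_state_pair)
qed

lemma sat_state_OneF_AnyF:
  fixes T :: "('u::finite,'b::finite) lit set"
  assumes T: "T \<in> ext xs x"
  shows "sat_state xs x {#SOne m T, SAny m T#} \<le> (sat_state xs x {#SAny m T#} :: ('d,'u,'b) assn)"
proof (rule predicate1I)
  fix e :: "('d,'u,'b) env"
  assume "sat_state xs x {#SOne m T, SAny m T#} e"
  then obtain e1 e2 where sp: "split2 e e1 e2" and One: "sat (OneF xs x m T) e1"
    and Any: "sat (AnyF xs x m T) e2"
    by (auto simp: sat_state_pair)
  show "sat_state xs x {#SAny m T#} e"
    using sat_AnyF_split2[OF x_fresh T sp sat_AnyF_of_OneF[OF x_fresh T One] Any]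
    by (simp add: sat_state_single)
qed

lemma sat_state_AnyF_idem:
  fixes T :: "('u::finite,'b::finite) lit set"
  assumes T: "T \<in> ext xs x"
  shows "sat_state xs x {#SAny m T, SAny m T#} = (sat_state xs x {#SAny m T#} :: ('d,'u,'b) assn)"
proof (intro ext iffI)
  fix e :: "('d,'u,'b) env"
  assume "sat_state xs x {#SAny m T, SAny m T#} e"
  then obtain e1 e2 where "split2 e e1 e2" "sat (AnyF xs x m T) e1" "sat (AnyF xs x m T) e2"
    by (auto simp: sat_state_pair)
  then show "sat_state xs x {#SAny m T#} e"
    using sat_AnyF_split2[OF x_fresh T] by (simp add: sat_state_single)
next
  fix e :: "('d,'u,'b) env"
  assume "sat_state xs x {#SAny m T#} e"
  then have Any: "sat (AnyF xs x m T) e"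
    by (simp add: sat_state_single)
  then have "inj_on (easg e) (set xs)"
    using inj_on_of_sat_sform[OF x_fresh, of "SAny m T"] T by simp
  then have "sat (AnyF xs x m T) (empty_env e)"
    by (rule sat_AnyF_of_GE[OF x_fresh T sat_GE_empty_env[OF x_fresh]])
  then show "sat_state xs x {#SAny m T, SAny m T#} e"
    using Any split2_empty_env by (auto simp: sat_state_pair)
qed

lemma sat_state_GE_unit:
  fixes c :: "('u::finite,'b::finite) sconj"
  assumes c: "wf_sconj xs x c"
  shows "sat_state xs x {#c, SGE#} = (sat_state xs x {#c#} :: ('d,'u,'b) assn)"
proof (intro ext iffI)
  fix e :: "('d,'u,'b) env"
  assume "sat_state xs x {#c, SGE#} e"
  then obtain e1 e2 where sp: "split2 e e1 e2" and "sat (sform xs x c) e1"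
    and GE: "sat (GE xs x) e2"
    by (auto simp: sat_state_pair)
  then show "sat_state xs x {#c#} e"
    using sat_sform_observably_equal[OF x_fresh c observably_equal_GE_frame[OF x_fresh sp GE]]
    by (simp add: sat_state_single)
next
  fix e :: "('d,'u,'b) env"
  assume "sat_state xs x {#c#} e"
  then have sat_c: "sat (sform xs x c) e"
    by (simp add: sat_state_single)
  then have "sat (GE xs x) (empty_env e)"
    by (rule sat_GE_empty_env[OF x_fresh inj_on_of_sat_sform[OF x_fresh c]])
  then show "sat_state xs x {#c, SGE#} e"
    using sat_c split2_empty_env by (auto simp: sat_state_pair)
qed

lemma sat_state_GE_AnyF:
  fixes T :: "('u::finite,'b::finite) lit set"
  shows "T \<in> ext xs x \<Longrightarrow> sat_state xs x {#SGE#} \<le> (sat_state xs x {#SAny m T#} :: ('d,'u,'b) assn)"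
  using sat_AnyF_of_GE[OF x_fresh] by (auto simp: sat_state_single)

lemma rule2_backward:
  fixes T1 T2 :: "('u::finite,'b::finite) lit set"
  assumes T1: "T1 \<in> ext xs x" and T2: "T2 \<in> ext xs x" and disj: "posset T1 \<inter> posset T2 = {}"
  shows "sat_state xs x {#SOne {1,2} (oplus xs x T1 T2), SAny {2} T2#} \<le>
    (sat_state xs x {#SOne {1} T1, SAny {2} T2#} :: ('d,'u,'b) assn)"
proof -
  let ?S = "sat_state xs x :: _ \<Rightarrow> ('d,'u,'b) assn"
  have "?S {#SOne {1,2} (oplus xs x T1 T2), SAny {2} T2#} =
      ?S ({#SAny {2} T2#} + {#SOne {1,2} (oplus xs x T1 T2)#})"
    by (simp add: add_mset_commute)
  also have "\<dots> \<le> ?S ({#SAny {2} T2#} + {#SOne {1} T1, SOne {2} T2#})"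
    by (rule sat_state_frame[OF rule1_backward[OF T1 T2 disj]])
  also have "\<dots> = ?S ({#SOne {1} T1#} + {#SOne {2} T2, SAny {2} T2#})"
    by (simp add: add_mset_commute)
  also have "\<dots> \<le> ?S ({#SOne {1} T1#} + {#SAny {2} T2#})"
    by (rule sat_state_frame[OF sat_state_OneF_AnyF[OF T2]])
  finally show ?thesis
    by (simp add: add_mset_commute)
qed

lemma rule3_backward:
  fixes T1 T2 :: "('u::finite,'b::finite) lit set"
  assumes T1: "T1 \<in> ext xs x" and T2: "T2 \<in> ext xs x" and disj: "posset T1 \<inter> posset T2 = {}"
  shows "sat_state xs x {#SAny {1} T1, SOne {1,2} (oplus xs x T1 T2)#} \<le>
    (sat_state xs x {#SAny {1} T1, SOne {2} T2#} :: ('d,'u,'b) assn)"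
proof -
  let ?S = "sat_state xs x :: _ \<Rightarrow> ('d,'u,'b) assn"
  have "?S {#SAny {1} T1, SOne {1,2} (oplus xs x T1 T2)#} =
      ?S ({#SAny {1} T1#} + {#SOne {1,2} (oplus xs x T1 T2)#})"
    by (simp add: add_mset_commute)
  also have "\<dots> \<le> ?S ({#SAny {1} T1#} + {#SOne {1} T1, SOne {2} T2#})"
    by (rule sat_state_frame[OF rule1_backward[OF T1 T2 disj]])
  also have "\<dots> = ?S ({#SOne {2} T2#} + {#SOne {1} T1, SAny {1} T1#})"
    by (simp add: add_mset_commute)
  also have "\<dots> \<le> ?S ({#SOne {2} T2#} + {#SAny {1} T1#})"
    by (rule sat_state_frame[OF sat_state_OneF_AnyF[OF T1]])
  finally show ?thesis
    by (simp add: add_mset_commute)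
qed

lemma rule4_backward:
  fixes T1 T2 :: "('u::finite,'b::finite) lit set"
  assumes T1: "T1 \<in> ext xs x" and T2: "T2 \<in> ext xs x" and disj: "posset T1 \<inter> posset T2 = {}"
  shows "sat_state xs x {#SAny {1} T1, SAny {2} T2, SAny {1,2} (oplus xs x T1 T2)#} \<le>
    (sat_state xs x {#SAny {1} T1, SAny {2} T2#} :: ('d,'u,'b) assn)"
proof -
  let ?S = "sat_state xs x :: _ \<Rightarrow> ('d,'u,'b) assn"
  have "?S {#SAny {1} T1, SAny {2} T2, SAny {1,2} (oplus xs x T1 T2)#} =
      ?S ({#SAny {1} T1, SAny {2} T2#} + {#SAny {1,2} (oplus xs x T1 T2)#})"
    by (simp add: add_mset_commute)
  also have "\<dots> \<le> ?S ({#SAny {1} T1, SAny {2} T2#} + {#SAny {1} T1, SAny {2} T2#})"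
    by (rule sat_state_frame[OF sat_state_AnyF_oplus[OF T1 T2 disj]])
  also have "\<dots> = ?S ({#SAny {2} T2, SAny {2} T2#} + {#SAny {1} T1, SAny {1} T1#})"
    by (simp add: add_mset_commute)
  also have "\<dots> = ?S ({#SAny {2} T2, SAny {2} T2#} + {#SAny {1} T1#})"
    by (rule sat_state_frame_eq[OF sat_state_AnyF_idem[OF T1]])
  also have "\<dots> = ?S ({#SAny {1} T1#} + {#SAny {2} T2, SAny {2} T2#})"
    by (simp add: add_mset_commute)
  also have "\<dots> = ?S ({#SAny {1} T1#} + {#SAny {2} T2#})"
    by (rule sat_state_frame_eq[OF sat_state_AnyF_idem[OF T2]])
  finally show ?thesis
    by (simp add: add_mset_commute)
qed

end

lemma eqstep_wf: "eqstep M M' \<Longrightarrow> \<forall>c\<in>#M. wf_sconj xs x c \<Longrightarrow> \<forall>c\<in>#M'. wf_sconj xs x c"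
  unfolding eqstep_def by auto

lemma rule14_wf: "rule14 xs x M M' \<Longrightarrow> \<forall>c\<in>#M. wf_sconj xs x c \<Longrightarrow> \<forall>c\<in>#M'. wf_sconj xs x c"
  unfolding rule14_def using oplus_ext(1) by fastforce

lemma rule56_wf: "rule56 M M' \<Longrightarrow> \<forall>c\<in>#M. wf_sconj xs x c \<Longrightarrow> \<forall>c\<in>#M'. wf_sconj xs x c"
  unfolding rule56_def by auto

context
  fixes xs :: "nat list" and x :: nat
  assumes x_fresh: "x \<notin> set xs"
begin

lemma eqstep_sat_state:
  fixes M :: "('u::finite,'b::finite) sconj multiset"
  assumes wf: "\<forall>c\<in>#M. wf_sconj xs x c" and step: "eqstep M M'"
  shows "sat_state xs x M' = (sat_state xs x M :: ('d,'u,'b) assn)"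
proof -
  let ?S = "sat_state xs x :: _ \<Rightarrow> ('d,'u,'b) assn"
  have unit: "?S (N + {#c, SGE#}) = ?S (N + {#c#})" if "wf_sconj xs x c" for c N
    by (rule sat_state_frame_eq[OF sat_state_GE_unit[OF x_fresh that]])
  have idem: "?S (N + {#SAny m T, SAny m T#}) = ?S (N + {#SAny m T#})" if "T \<in> ext xs x" for N m T
    by (rule sat_state_frame_eq[OF sat_state_AnyF_idem[OF x_fresh that]])
  from step show ?thesis
    unfolding eqstep_def
  proof (elim disjE conjE exE)
    assume "M \<noteq> {#}" and M': "M' = add_mset SGE M"
    then obtain c N where M: "M = N + {#c#}"
      by (metis multiset_cases add_mset_add_single)
    then show ?thesis
      using unit[of c N] wf by (simp add: M' add_mset_commute)
  next
    assume "M' \<noteq> {#}" and M: "M = add_mset SGE M'"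
    then obtain c N where M': "M' = N + {#c#}"
      by (metis multiset_cases add_mset_add_single)
    then show ?thesis
      using unit[of c N] wf by (simp add: M add_mset_commute)
  qed (use wf idem in auto)
qed

lemma rule14_step_backward:
  fixes M :: "('u::finite,'b::finite) sconj multiset"
  assumes wf: "\<forall>c\<in>#M. wf_sconj xs x c" and step: "rule14 xs x M M'"
  shows "sat_state xs x M' \<le> (sat_state xs x M :: ('d,'u,'b) assn)"
proof -
  obtain N T1 T2 where disj: "posset T1 \<inter> posset T2 = {}" and cases:
    "(M = N + {#SOne {1} T1, SOne {2} T2#} \<and> M' = N + {#SOne {1,2} (oplus xs x T1 T2)#}) \<or>
     (M = N + {#SOne {1} T1, SAny {2} T2#} \<and>
        M' = N + {#SOne {1,2} (oplus xs x T1 T2), SAny {2} T2#}) \<or>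
     (M = N + {#SAny {1} T1, SOne {2} T2#} \<and>
        M' = N + {#SAny {1} T1, SOne {1,2} (oplus xs x T1 T2)#}) \<or>
     (M = N + {#SAny {1} T1, SAny {2} T2#} \<and>
        M' = N + {#SAny {1} T1, SAny {2} T2, SAny {1,2} (oplus xs x T1 T2)#})"
    using step unfolding rule14_def by blast
  have T1: "T1 \<in> ext xs x" and T2: "T2 \<in> ext xs x"
    using cases wf by auto
  note frame = sat_state_frame[where N = N and 'd = 'd]
  from cases show ?thesis
    by (elim disjE conjE) (simp_all only:
      frame[OF rule1_backward[OF x_fresh T1 T2 disj]]
      frame[OF rule2_backward[OF x_fresh T1 T2 disj]]
      frame[OF rule3_backward[OF x_fresh T1 T2 disj]]
      frame[OF rule4_backward[OF x_fresh T1 T2 disj]])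
qed

lemma rule56_step_backward:
  fixes M :: "('u::finite,'b::finite) sconj multiset"
  assumes wf: "\<forall>c\<in>#M. wf_sconj xs x c" and step: "rule56 M M'"
  shows "sat_state xs x M' \<le> (sat_state xs x M :: ('d,'u,'b) assn)"
proof -
  obtain N T i where M: "M = N + {#SAny i T#}" and M': "M' = N + {#SGE#}"
    using step unfolding rule56_def by blast
  have "T \<in> ext xs x"
    using wf M by simp
  then show ?thesis
    unfolding M M' by (rule sat_state_frame[OF sat_state_GE_AnyF[OF x_fresh]])
qed

end

lemma rtranclp_backward_invariant:
  fixes Q :: "'a \<Rightarrow> 'b::preorder"
  assumes "R\<^sup>*\<^sup>* a b" "I a"
    and step: "\<And>a b. R a b \<Longrightarrow> I a \<Longrightarrow> I b \<and> Q b \<le> Q a"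
  shows "I b \<and> Q b \<le> Q a"
  using assms(1,2) by (induction rule: rtranclp_induct) (auto dest: step intro: order_trans)

lemma derivation_backward:
  fixes M0 :: "('u::finite,'b::finite) sconj multiset"
  assumes x_fresh: "x \<notin> set xs" and wf: "\<forall>c\<in>#M0. wf_sconj xs x c"
    and "(phase1 xs x)\<^sup>*\<^sup>* M0 M1" "phase2\<^sup>*\<^sup>* M1 M2"
  shows "sat_state xs x M2 \<le> (sat_state xs x M0 :: ('d,'u,'b) assn)"
proof -
  let ?S = "sat_state xs x :: _ \<Rightarrow> ('d,'u,'b) assn"
  have eq: "(\<forall>c\<in>#M'. wf_sconj xs x c) \<and> ?S M' \<le> ?S M"
    if "eqstep M M'" "\<forall>c\<in>#M. wf_sconj xs x c" for M M'
    using eqstep_wf[OF that] eqstep_sat_state[OF x_fresh that(2,1), where 'd = 'd] by simp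
  have "(\<forall>c\<in>#M'. wf_sconj xs x c) \<and> ?S M' \<le> ?S M"
    if "phase1 xs x M M'" "\<forall>c\<in>#M. wf_sconj xs x c" for M M'
    using that eq rule14_wf rule14_step_backward[OF x_fresh that(2), where 'd = 'd]
    unfolding phase1_def by blast
  then have M1: "(\<forall>c\<in>#M1. wf_sconj xs x c) \<and> ?S M1 \<le> ?S M0"
    using assms(3) wf by (rule rtranclp_backward_invariant[rotated 2])
  have "(\<forall>c\<in>#M'. wf_sconj xs x c) \<and> ?S M' \<le> ?S M"
    if "phase2 M M'" "\<forall>c\<in>#M. wf_sconj xs x c" for M M'
    using that eq rule56_wf rule56_step_backward[OF x_fresh that(2), where 'd = 'd]
    unfolding phase2_def by blast
  then have "(\<forall>c\<in>#M2. wf_sconj xs x c) \<and> ?S M2 \<le> ?S M1"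
    using assms(4) M1[THEN conjunct1] by (rule rtranclp_backward_invariant[rotated 2])
  with M1 show ?thesis
    by (blast intro: order_trans)
qed

lemma sat_Xeq_of_state:
  "sat_state xs x (replicate_mset i (SOne m T) + {#SGE#}) e \<Longrightarrow> sat (Xeq xs x m T i) e"
proof (induction i arbitrary: e)
  case 0
  then show ?case
    by (simp add: sat_state_single)
next
  case (Suc i)
  then obtain e1 e2 where "split2 e e1 e2" "sat (OneF xs x m T) e1"
    and "sat_state xs x (replicate_mset i (SOne m T) + {#SGE#}) e2"
    using sat_state_union[of xs x "{#SOne m T#}" "replicate_mset i (SOne m T) + {#SGE#}" e]
    by (auto simp: sat_state_single)
  then show ?case
    using Suc.IH by auto
qed

lemma sat_Xf_of_state: "sat_state xs x (xconj m (T, s)) e \<Longrightarrow> sat (Xf xs x m T s) e"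
proof (cases s)
  case (AtLeast p)
  assume "sat_state xs x (xconj m (T, s)) e"
  then obtain e1 e2 where "split2 e e1 e2"
    and "sat_state xs x (replicate_mset p (SOne m T) + {#SGE#}) e1" and "sat (AnyF xs x m T) e2"
    using AtLeast sat_state_union[of xs x "replicate_mset p (SOne m T) + {#SGE#}" "{#SAny m T#}" e]
    by (auto simp: sat_state_single)
  moreover have "sat (Xeq xs x m T p) e1"
    by (rule sat_Xeq_of_state) fact
  ultimately show ?thesis
    using AtLeast by auto
qed (simp add: sat_Xeq_of_state)

lemma sat_foldl_of_state:
  "sat_state xs x ({#SK F#} + sum_list (map (xconj m) ps)) e \<Longrightarrow>
    sat (foldl Star (KF xs x F) (map (\<lambda>(T, s). Xf xs x m T s) ps)) e"
proof (induction ps arbitrary: e rule: rev_induct)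
  case Nil
  then show ?case
    by (simp add: sat_state_single)
next
  case (snoc p ps)
  obtain T s where p: "p = (T, s)"
    by (cases p)
  have "sat_state xs x (({#SK F#} + sum_list (map (xconj m) ps)) + xconj m p) e"
    using snoc.prems by (simp add: ac_simps)
  then obtain e1 e2 where "split2 e e1 e2"
    and "sat_state xs x ({#SK F#} + sum_list (map (xconj m) ps)) e1"
    and "sat_state xs x (xconj m p) e2"
    unfolding sat_state_union by blast
  moreover have "sat (Xf xs x m T s) e2"
    by (rule sat_Xf_of_state) (use calculation p in simp)
  ultimately show ?case
    using snoc.IH p by auto
qed

lemma wf_init_state:
  fixes C1 C2 :: "('u,'b) cstar"
  assumes "is_cstar xs x C1" "is_cstar xs x C2"
  shows "\<forall>c\<in>#init_state xs C1 C2. wf_sconj xs x c"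
proof -
  have parts: "\<forall>c\<in>#sum_list (map (xconj m) (cparts C)). wf_sconj xs x c"
    if C: "is_cstar xs x C" for C :: "('u,'b) cstar" and m
  proof
    fix c
    assume "c \<in># sum_list (map (xconj m) (cparts C))"
    then obtain T s where Ts: "(T, s) \<in> set (cparts C)" and c: "c \<in># xconj m (T, s)"
      by auto
    have "T \<in> ext xs x"
      using C Ts unfolding is_cstar_def by (metis fst_conv image_eqI list.set_map)
    then show "wf_sconj xs x c"
      using c by (cases s) (auto split: if_splits)
  qed
  have "is_gccat xs (otimes xs (cF C1) (cF C2))"
    by (rule otimes_gccat(1)) (use assms in \<open>simp_all add: is_cstar_def\<close>)
  then show ?thesis
    using parts[OF assms(1), of "{1}"] parts[OF assms(2), of "{2}"] unfolding init_state_def by auto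
qed

lemma sat_init_state:
  fixes e :: "('d,'u::finite,'b::finite) env"
  assumes x_fresh: "x \<notin> set xs" and C1: "is_cstar xs x C1" and C2: "is_cstar xs x C2"
    and init: "sat_state xs x (init_state xs C1 C2) e"
  obtains e1 e2 where "split2 e e1 e2"
    and "sat (foldl Star (KF xs x (cF C1)) (map (\<lambda>(T, s). Xf xs x {1} T s) (cparts C1))) e1"
    and "sat (foldl Star (KF xs x (cF C2)) (map (\<lambda>(T, s). Xf xs x {2} T s) (cparts C2))) e2"
proof -
  define X1 X2 where "X1 = sum_list (map (xconj {1}) (cparts C1))"
    and "X2 = sum_list (map (xconj {2}) (cparts C2))"
  have F1: "is_gccat xs (cF C1)" and F2: "is_gccat xs (cF C2)"
    using C1 C2 by (simp_all add: is_cstar_def)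
  have disj: "posset (cF C1) \<inter> posset (cF C2) = {}"
  proof (rule ccontr)
    assume "\<not> ?thesis"
    then have "sat_state xs x ({#SFalse#} + (X1 + X2)) e"
      using init by (simp add: init_state_def X1_def X2_def)
    then show False
      unfolding sat_state_union sat_state_single by simp
  qed
  then have "sat_state xs x ((X1 + X2) + {#SK (otimes xs (cF C1) (cF C2))#}) e"
    using init by (simp add: init_state_def X1_def X2_def ac_simps)
  then have "sat_state xs x ((X1 + X2) + {#SK (cF C1), SK (cF C2)#}) e"
    by (rule predicate1D[OF sat_state_frame[OF sat_state_KF_otimes[OF x_fresh F1 F2 disj]]])
  then have "sat_state xs x (({#SK (cF C1)#} + X1) + ({#SK (cF C2)#} + X2)) e"
    by (simp add: ac_simps add_mset_commute)
  then obtain e1 e2 where "split2 e e1 e2"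
    and "sat_state xs x ({#SK (cF C1)#} + X1) e1" "sat_state xs x ({#SK (cF C2)#} + X2) e2"
    unfolding sat_state_union by blast
  then show ?thesis
    using that sat_foldl_of_state unfolding X1_def X2_def by blast
qed

lemma sat_eq_form: "sat (eq_form E) e \<longleftrightarrow> (\<forall>(y, z)\<in>set E. easg e y = easg e z)"
  by (auto simp: eq_form_def sat_conj_list)

lemma sat_init_state_of_derivation:
  fixes e :: "('d,'u::finite,'b::finite) env"
  assumes "x \<notin> set xs" "is_cstar xs x C1" "is_cstar xs x C2"
    and "derivation_result xs x C1 C2 H" and "sat H e"
  shows "sat_state xs x (init_state xs C1 C2) e"
proof -
  obtain M1 M2 cs where r1: "(phase1 xs x)\<^sup>*\<^sup>* (init_state xs C1 C2) M1" and r2: "phase2\<^sup>*\<^sup>* M1 M2"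
    and fin: "final_state M2" and cs: "mset cs = M2" and H: "H = star_list (map (sform xs x) cs)"
    using assms(4) unfolding derivation_result_def by blast
  have "cs \<noteq> []"
    using fin cs by (auto simp: final_state_def)
  then have "sat_state xs x M2 e"
    using assms(5) by (simp add: H sat_star_list flip: cs sat_state_mset)
  then show ?thesis
    by (rule predicate1D[OF derivation_backward[OF assms(1) wf_init_state[OF assms(2,3)] r1 r2]])
qed

theorem lemma16:
  fixes xs :: "nat list" and x :: nat
    and C1 C2 :: "('u::finite, 'b::finite) cstar"
    and H :: "('u, 'b) form"
    and e :: "('d, 'u, 'b) env"
  assumes "distinct xs" and "x \<notin> set xs"
    and "is_cstar xs x C1" and "is_cstar xs x C2" and "compatible C1 C2"
    and "derivation_result xs x C1 C2 H"
    and "wf_env e"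
  shows "sat (Imp (Conj (eq_form (ceq C1)) H) (Star (Sf xs x {1} C1) (Sf xs x {2} C2))) e"
proof (simp only: sat.simps, intro impI, elim conjE)
  assume eq: "sat (eq_form (ceq C1)) e" and "sat H e"
  then obtain e1 e2 where sp: "split2 e e1 e2"
    and "sat (foldl Star (KF xs x (cF C1)) (map (\<lambda>(T, s). Xf xs x {1} T s) (cparts C1))) e1"
    and "sat (foldl Star (KF xs x (cF C2)) (map (\<lambda>(T, s). Xf xs x {2} T s) (cparts C2))) e2"
    using sat_init_state[OF assms(2-4) sat_init_state_of_derivation[OF assms(2-4,6)]] by blast
  moreover have "sat (eq_form (ceq C1)) e1" "sat (eq_form (ceq C2)) e2"
    using eq sp assms(5) by (auto simp: sat_eq_form split2_def compatible_def)
  ultimately show "\<exists>e1 e2. split2 e e1 e2 \<and> sat (Sf xs x {1} C1) e1 \<and> sat (Sf xs x {2} C2) e2"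
    unfolding Sf_def by auto
qed

end
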